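(* There is a deterministic distributed algorithm for the synchronous network model (with a leader and messages of $O(\log n)$ bits) which, on every connected graph $G=(V,E)$ with $n=|V|$ and $m=|E|$, terminates with every node storing a label such that two nodes store the same label if and only if they lie in the same edge-biconnected component of $G$ (so an edge is a bridge if and only if its endpoints store different labels). The algorithm runs in $O(\mathrm{Diam}(G))$ time and sends $O(m)$ messages in total.
   Context: Network model: $G=(V,E)$ is a connected undirected graph whose nodes are processors and whose edges are reliable two-way communication links. Each node initially knows only its own identity and its incident links. The network is synchronous (computation proceeds in rounds; in each round every node may send one message over each incident link, and the messages are received before the next round). One node is initially distinguished as the leader. Every message has $O(\log n)$ bits. The time complexity is the number of rounds until termination, and the message complexity is the total number of messages sent. $\mathrm{Diam}(G)$ is the maximum distance between two vertices of $G$. Edge-biconnectivity: define $x\sim y$ for $x,y\in V$ if for every edge $e\in E$, $x$ and $y$ are connected by a path in $G-e$. This is an equivalence relation, and its equivalence classes are the edge-biconnected components. An edge is a bridge if its deletion disconnects $G$. *)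

theory Defs
  imports Main
begin

definition simple_graph :: "nat set \<Rightarrow> nat set set \<Rightarrow> bool" where
  "simple_graph V E \<longleftrightarrow> finite V \<and>
     (\<forall>e\<in>E. \<exists>u v. e = {u, v} \<and> u \<noteq> v \<and> u \<in> V \<and> v \<in> V)"

definition adj :: "nat set set \<Rightarrow> (nat \<times> nat) set" where
  "adj E = {(u, v). {u, v} \<in> E}"

definition nbrs :: "nat set set \<Rightarrow> nat \<Rightarrow> nat set" where
  "nbrs E v = {u. {u, v} \<in> E}"

definition connected_graph :: "nat set \<Rightarrow> nat set set \<Rightarrow> bool" where
  "connected_graph V E \<longleftrightarrow> (\<forall>u\<in>V. \<forall>v\<in>V. (u, v) \<in> (adj E)\<^sup>*)"

definition edge_biconn :: "nat set \<Rightarrow> nat set set \<Rightarrow> nat \<Rightarrow> nat \<Rightarrow> bool" where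
  "edge_biconn V E x y \<longleftrightarrow> x \<in> V \<and> y \<in> V \<and>
     (\<forall>e\<in>E. (x, y) \<in> (adj (E - {e}))\<^sup>*)"

definition dist :: "nat set set \<Rightarrow> nat \<Rightarrow> nat \<Rightarrow> nat" where
  "dist E u v = (LEAST k. (u, v) \<in> adj E ^^ k)"

definition diam :: "nat set \<Rightarrow> nat set set \<Rightarrow> nat" where
  "diam V E = Max {dist E u v | u v. u \<in> V \<and> v \<in> V}"

text \<open>A deterministic algorithm: local states are encoded as nat lists.
 init: own identity, identities of the endpoints of incident links, leader flag.
 msg s u: message (if any) sent over the link to neighbour u in the current round.
 trans s r: new state, given r u = message received from neighbour u.
 halted s: node has terminated; out s: label stored by the node.\<close>

record alg =
  init :: "nat \<Rightarrow> nat set \<Rightarrow> bool \<Rightarrow> nat list"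
  msg :: "nat list \<Rightarrow> nat \<Rightarrow> nat option"
  trans :: "nat list \<Rightarrow> (nat \<Rightarrow> nat option) \<Rightarrow> nat list"
  halted :: "nat list \<Rightarrow> bool"
  out :: "nat list \<Rightarrow> nat"

primrec run :: "alg \<Rightarrow> nat set set \<Rightarrow> nat \<Rightarrow> nat \<Rightarrow> nat \<Rightarrow> nat list" where
  "run A E l 0 = (\<lambda>v. init A v (nbrs E v) (v = l))"
| "run A E l (Suc t) = (let S = run A E l t in
     (\<lambda>v. if halted A (S v) then S v
          else trans A (S v)
                 (\<lambda>u. if u \<in> nbrs E v \<and> \<not> halted A (S u) then msg A (S u) v else None)))"

text \<open>Message sent by v to u in round t+1 (computed from states after t rounds).\<close>
definition sent :: "alg \<Rightarrow> nat set set \<Rightarrow> nat \<Rightarrow> nat \<Rightarrow> nat \<Rightarrow> nat \<Rightarrow> nat option" where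
  "sent A E l t v u = (if {u, v} \<in> E \<and> \<not> halted A (run A E l t v)
                        then msg A (run A E l t v) u else None)"

definition msgs_in_round :: "alg \<Rightarrow> nat set set \<Rightarrow> nat \<Rightarrow> nat \<Rightarrow> nat" where
  "msgs_in_round A E l t = card {(v, u). sent A E l t v u \<noteq> None}"

end

(*
  The leader floods the graph to build a BFS tree T: every node takes as parent its least
  neighbour one level closer to the leader.  Removing a non-tree edge leaves T intact, so only
  tree edges can be bridges, and the tree edge above a is a bridge iff it is the only edge leaving
  the subtree of a.  Numbering T in preorder makes the subtree of a the interval
  [pre a, pre a + size a), so this holds iff the least and the greatest preorder number among the
  subtree nodes and their neighbours other than their parents (low a and high a) lie in that
  interval.  Labelling each node by its nearest ancestor (or itself) whose parent edge is a bridge,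
  or by the leader if there is none, gives two nodes the same label iff no bridge separates them,
  i.e. iff they are edge-biconnected.

  Subtree sizes and the height h of T, preorder numbers, low/high and labels are computed by two
  convergecasts and two broadcasts along T and one round in which all nodes exchange their preorder
  numbers.  Scheduling each of them by depth, all nodes finish in round 5h + 5 <= 10 (Diam + 1);
  every edge carries at most eight messages, each encoding a tag and at most two numbers below
  n + max V + 2.

  The correctness of the distributed run is reduced to the tree computation by showing that the
  state of each node is exactly the log of the messages that the tree computation prescribes.
*)

theory Submission
  imports Defs "HOL-Library.Countable" "HOL-Library.Nat_Bijection"
begin

lemma adj_sym: "(a, b) \<in> adj F \<longleftrightarrow> (b, a) \<in> adj F"
  by (simp add: adj_def insert_commute)

lemma adj_rtrancl_sym: "(a, b) \<in> (adj F)\<^sup>* \<Longrightarrow> (b, a) \<in> (adj F)\<^sup>*"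
  using adj_sym by (metis converse_iff rtrancl_converseI symI sym_rtrancl symD)

lemma UN_consecutive_intervals:
  fixes g :: "'a::linorder \<Rightarrow> nat"
  assumes "finite C"
  shows "(\<Union>c\<in>C. {b + sum g {c'\<in>C. c' < c} ..< b + sum g {c'\<in>C. c' < c} + g c})
    = {b ..< b + sum g C}"
  using assms
proof (induct C rule: finite_linorder_max_induct)
  case empty
  then show ?case by simp
next
  case (insert m C)
  have "{c'\<in>insert m C. c' < c} = {c'\<in>C. c' < c}" if "c \<in> C" for c
    using that insert by auto
  moreover have "{c'\<in>insert m C. c' < m} = C" using insert by auto
  ultimately have "(\<Union>c\<in>insert m C.
      {b + sum g {c'\<in>insert m C. c' < c} ..< b + sum g {c'\<in>insert m C. c' < c} + g c})
    = {b + sum g C ..< b + sum g C + g m} \<union>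
      (\<Union>c\<in>C. {b + sum g {c'\<in>C. c' < c} ..< b + sum g {c'\<in>C. c' < c} + g c})"
    by auto
  also have "\<dots> = {b ..< b + sum g (insert m C)}" using insert by auto
  finally show ?case .
qed

lemma Min_Un_UN:
  fixes A :: "'a::linorder set"
  assumes A: "finite A" "A \<noteq> {}" and C: "finite C"
    and B: "\<And>c. c \<in> C \<Longrightarrow> finite (B c) \<and> B c \<noteq> {}"
  shows "Min (A \<union> (\<Union>c\<in>C. B c)) = Min (A \<union> (\<lambda>c. Min (B c)) ` C)"
proof (rule antisym)
  have fin: "finite (\<Union>c\<in>C. B c)" using C B by blast
  have "Min (A \<union> (\<Union>c\<in>C. B c)) \<le> Min (B c)" if "c \<in> C" for c
    using B[OF that] that fin A by (intro Min_le) (auto intro: Min_in)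
  then show "Min (A \<union> (\<Union>c\<in>C. B c))
    \<le> Min (A \<union> (\<lambda>c. Min (B c)) ` C)"
    using A C fin by auto
  have "Min (A \<union> (\<lambda>c. Min (B c)) ` C) \<le> x" if "c \<in> C" "x \<in> B c" for c x
    using that B[OF that(1)] A C by (intro order_trans[OF Min_le Min_le]) auto
  then show "Min (A \<union> (\<lambda>c. Min (B c)) ` C) \<le> Min (A \<union> (\<Union>c\<in>C. B c))"
    using A C fin by auto
qed
lemma Max_Un_UN:
  fixes A :: "'a::linorder set"
  assumes A: "finite A" "A \<noteq> {}" and C: "finite C"
    and B: "\<And>c. c \<in> C \<Longrightarrow> finite (B c) \<and> B c \<noteq> {}"
  shows "Max (A \<union> (\<Union>c\<in>C. B c)) = Max (A \<union> (\<lambda>c. Max (B c)) ` C)"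
proof (rule antisym)
  have fin: "finite (\<Union>c\<in>C. B c)" using C B by blast
  have "Max (B c) \<le> Max (A \<union> (\<Union>c\<in>C. B c))" if "c \<in> C" for c
    using B[OF that] that fin A by (intro Max_ge) (auto intro: Max_in)
  then show "Max (A \<union> (\<lambda>c. Max (B c)) ` C) \<le> Max (A \<union> (\<Union>c\<in>C. B c))"
    using A C fin by auto
  have "x \<le> Max (A \<union> (\<lambda>c. Max (B c)) ` C)" if "c \<in> C" "x \<in> B c" for c x
    using that B[OF that(1)] A C by (intro order_trans[OF Max_ge Max_ge]) auto
  then show "Max (A \<union> (\<Union>c\<in>C. B c))
    \<le> Max (A \<union> (\<lambda>c. Max (B c)) ` C)"
    using A C fin by auto
qed

lemma prod_encode_less_square: "prod_encode (a, b) < (a + b + 1)^2"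
proof -
  let ?s = "a + b"
  have "triangle ?s \<le> ?s * Suc ?s" unfolding triangle_def by (rule div_le_dividend)
  then have "prod_encode (a, b) \<le> ?s * Suc ?s + ?s" unfolding prod_encode_def by simp
  also have "\<dots> < Suc ?s * Suc ?s" by simp
  finally show ?thesis by (simp add: power2_eq_square)
qed

lemma prod_encode_less: "a < N \<Longrightarrow> b < N \<Longrightarrow> prod_encode (a, b) < 4 * N^2"
proof -
  assume "a < N" "b < N"
  then have "a + b + 1 \<le> 2 * N" by simp
  then have "(a + b + 1)^2 \<le> (2 * N)^2" by (rule power_mono) simp
  then show ?thesis using prod_encode_less_square[of a b] by (simp add: power_mult_distrib)
qed

lemma tagged_prod_encode_less: "k \<le> 6 \<Longrightarrow> p < 4 * N^2 \<Longrightarrow> 3 \<le> N \<Longrightarrow> prod_encode (k, p) < N^10"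
proof -
  assume k: "k \<le> 6" and p: "p < 4 * N^2" and N: "3 \<le> N"
  have "9 \<le> N^2" using power_mono[OF N, of 2] by simp
  then have "k + p + 1 \<le> 5 * N^2" using k p by simp
  then have "(k + p + 1)^2 \<le> (5 * N^2)^2" by (rule power_mono) simp
  also have "\<dots> = 25 * N^4" by (simp add: power_mult_distrib power_mult[symmetric])
  also have "\<dots> \<le> N^6 * N^4"
  proof -
    have "729 \<le> N^6" using power_mono[OF N, of 6] by simp
    then have "25 \<le> N^6" by simp
    then show ?thesis by (rule mult_right_mono) simp
  qed
  also have "\<dots> = N^10" by (simp only: power_add[symmetric]) simp
  finally show ?thesis using prod_encode_less_square[of k p] by simp
qed

section \<open>The BFS tree of the leader\<close>

locale rooted_graph =
  fixes V :: "nat set" and E :: "nat set set" and l :: nat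
  assumes simple: "simple_graph V E" and V_nonempty: "V \<noteq> {}"
    and connected: "connected_graph V E" and root_in_V: "l \<in> V"
begin

lemma finite_V: "finite V" using simple by (simp add: simple_graph_def)

lemma edge_doubleton: "e \<in> E \<Longrightarrow> \<exists>u v. e = {u,v} \<and> u \<noteq> v \<and> u \<in> V \<and> v \<in> V"
  using simple by (simp add: simple_graph_def)

lemma nbrsD: "y \<in> nbrs E x \<Longrightarrow> y \<in> V \<and> x \<in> V \<and> y \<noteq> x"
proof -
  assume "y \<in> nbrs E x"
  then have "{y,x} \<in> E" by (simp add: nbrs_def)
  then obtain u v where "{y,x} = {u,v}" "u \<noteq> v" "u \<in> V" "v \<in> V"
    using edge_doubleton by blast
  then show ?thesis by (metis doubleton_eq_iff insert_absorb2 singleton_insert_inj_eq)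
qed

lemma nbrs_sym: "y \<in> nbrs E x \<longleftrightarrow> x \<in> nbrs E y"
  by (simp add: nbrs_def insert_commute)

lemma finite_nbrs: "finite (nbrs E x)"
  by (rule finite_subset[OF _ finite_V]) (auto dest: nbrsD)

lemma finite_E: "finite E"
proof -
  have "E \<subseteq> Pow V" using edge_doubleton by blast
  then show ?thesis using finite_V by (meson finite_Pow_iff finite_subset)
qed

definition depth :: "nat \<Rightarrow> nat" where "depth v = dist E l v"

lemma adj_iff: "(u,v) \<in> adj E \<longleftrightarrow> {u,v} \<in> E" by (simp add: adj_def)

lemma depth_path: "v \<in> V \<Longrightarrow> (l,v) \<in> adj E ^^ depth v"
proof -
  assume "v \<in> V"
  then have "(l,v) \<in> (adj E)\<^sup>*"
    using connected root_in_V by (simp add: connected_graph_def)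
  then obtain n where "(l,v) \<in> adj E ^^ n" using rtrancl_power by blast
  then show ?thesis unfolding depth_def dist_def by (rule LeastI)
qed

lemma depth_le: "(l,v) \<in> adj E ^^ k \<Longrightarrow> depth v \<le> k"
  unfolding depth_def dist_def by (rule Least_le)

lemma depth_nbr_le: "y \<in> nbrs E x \<Longrightarrow> depth y \<le> depth x + 1"
proof -
  assume a: "y \<in> nbrs E x"
  then have "x \<in> V" by (auto dest: nbrsD)
  then have "(l,x) \<in> adj E ^^ depth x" by (rule depth_path)
  moreover have "(x,y) \<in> adj E" using a by (simp add: adj_iff nbrs_def insert_commute)
  ultimately have "(l,y) \<in> adj E ^^ Suc (depth x)" by (rule relpow_Suc_I)
  then show ?thesis using depth_le by fastforce
qed

lemma depth_root: "depth l = 0"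
proof -
  have "(l,l) \<in> adj E ^^ 0" by simp
  then show ?thesis using depth_le by fastforce
qed

lemma depth_eq_0_iff: "v \<in> V \<Longrightarrow> depth v = 0 \<longleftrightarrow> v = l"
  using depth_path[of v] depth_root by auto

lemma ex_parent_candidate: "v \<in> V \<Longrightarrow> v \<noteq> l \<Longrightarrow> \<exists>x. {x,v} \<in> E \<and> depth x + 1 = depth v"
proof -
  assume v: "v \<in> V" "v \<noteq> l"
  then obtain k where k: "depth v = Suc k" using depth_eq_0_iff by (cases "depth v") auto
  have "(l,v) \<in> adj E ^^ Suc k" using depth_path[OF v(1)] k by simp
  then obtain x where x: "(l,x) \<in> adj E ^^ k" "(x,v) \<in> adj E" by (rule relpow_Suc_E)
  have e: "{x,v} \<in> E" using x(2) by (simp add: adj_iff)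
  have "depth x \<le> k" using x(1) by (rule depth_le)
  moreover have "depth v \<le> depth x + 1"
    using e by (intro depth_nbr_le) (simp add: nbrs_def insert_commute)
  ultimately show ?thesis using e k by (intro exI[of _ x]) auto
qed

definition parent :: "nat \<Rightarrow> nat" where
  "parent v = (if v = l then l else LEAST x. {x,v} \<in> E \<and> depth x + 1 = depth v)"

lemma parent_spec: "v \<in> V \<Longrightarrow> v \<noteq> l \<Longrightarrow> {parent v, v} \<in> E \<and> depth (parent v) + 1 = depth v"
proof -
  assume "v \<in> V" "v \<noteq> l"
  then obtain x where "{x,v} \<in> E \<and> depth x + 1 = depth v"
    using ex_parent_candidate by blast
  then have "{LEAST x. {x,v} \<in> E \<and> depth x + 1 = depth v, v} \<in> E
    \<and> depth (LEAST x. {x,v} \<in> E \<and> depth x + 1 = depth v) + 1 = depth v"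
    by (rule LeastI)
  then show ?thesis using \<open>v \<noteq> l\<close> by (simp add: parent_def)
qed

lemma parent_root[simp]: "parent l = l" by (simp add: parent_def)

lemma parent_in_nbrs: "v \<in> V \<Longrightarrow> v \<noteq> l \<Longrightarrow> parent v \<in> nbrs E v"
  using parent_spec by (simp add: nbrs_def)

lemma parent_in_V: "v \<in> V \<Longrightarrow> parent v \<in> V"
  using parent_in_nbrs nbrsD root_in_V by (cases "v = l") auto

lemma depth_parent: "v \<in> V \<Longrightarrow> v \<noteq> l \<Longrightarrow> depth (parent v) + 1 = depth v"
  using parent_spec by blast

lemma parent_pow_in_V: "x \<in> V \<Longrightarrow> (parent ^^ k) x \<in> V"
  by (induct k) (auto intro: parent_in_V)

lemma parent_pow_root[simp]: "(parent ^^ k) l = l"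
  by (induct k) auto

lemma depth_parent_pow: "x \<in> V \<Longrightarrow> depth ((parent ^^ k) x) = depth x - k"
proof (induct k)
  case 0 then show ?case by simp
next
  case (Suc k)
  let ?y = "(parent ^^ k) x"
  have yV: "?y \<in> V" using Suc parent_pow_in_V by blast
  show ?case
  proof (cases "?y = l")
    case True then show ?thesis using Suc depth_root by simp
  next
    case False then show ?thesis using Suc depth_parent[OF yV] by simp
  qed
qed

lemma parent_pow_depth: "x \<in> V \<Longrightarrow> (parent ^^ depth x) x = l"
  using depth_parent_pow[of x "depth x"] parent_pow_in_V[of x "depth x"] depth_eq_0_iff by auto

lemma parent_pow_add: "(parent ^^ (i + j)) x = (parent ^^ i) ((parent ^^ j) x)"
  by (simp add: funpow_add)

lemma depth_parent_pow_eq: "x \<in> V \<Longrightarrow> (parent ^^ k) x = c \<Longrightarrow> c \<noteq> l \<Longrightarrow> depth c + k = depth x"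
proof -
  assume a: "x \<in> V" "(parent ^^ k) x = c" "c \<noteq> l"
  have "k \<le> depth x"
  proof (rule ccontr)
    assume "\<not> k \<le> depth x"
    then have "k = (k - depth x) + depth x" by simp
    then have "(parent ^^ k) x = (parent ^^ (k - depth x)) ((parent ^^ depth x) x)"
      by (metis parent_pow_add)
    then show False using a parent_pow_depth by simp
  qed
  then show ?thesis using depth_parent_pow[OF a(1), of k] a by simp
qed

lemma parent_pow_diff:
  "(parent ^^ i) x = a \<Longrightarrow> (parent ^^ j) x = b \<Longrightarrow> i \<le> j \<Longrightarrow> (parent ^^ (j - i)) a = b"
  by (metis le_add_diff_inverse2 parent_pow_add)

lemma depth_less_card: "x \<in> V \<Longrightarrow> depth x < card V"
proof -
  assume x: "x \<in> V"
  have inj: "inj_on (\<lambda>j. (parent ^^ j) x) {..depth x}"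
  proof (rule inj_onI)
    fix i j assume "i \<in> {..depth x}" "j \<in> {..depth x}" "(parent ^^ i) x = (parent ^^ j) x"
    then show "i = j" using depth_parent_pow[OF x, of i] depth_parent_pow[OF x, of j] by auto
  qed
  have "(\<lambda>j. (parent ^^ j) x) ` {..depth x} \<subseteq> V"
    using parent_pow_in_V[OF x] by auto
  then have "card ((\<lambda>j. (parent ^^ j) x) ` {..depth x}) \<le> card V"
    using finite_V by (rule card_mono[rotated])
  then show ?thesis using card_image[OF inj] by simp
qed

definition subtree :: "nat \<Rightarrow> nat set" where
  "subtree a = {x \<in> V. \<exists>k. (parent ^^ k) x = a}"
definition children :: "nat \<Rightarrow> nat set" where
  "children a = {c \<in> V. c \<noteq> l \<and> parent c = a}"

lemma subtree_subset: "subtree a \<subseteq> V" by (auto simp: subtree_def)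
lemma finite_subtree: "finite (subtree a)" using finite_V subtree_subset finite_subset by blast
lemma finite_children: "finite (children a)"
  by (rule finite_subset[OF _ finite_V]) (auto simp: children_def)

lemma self_in_subtree: "a \<in> V \<Longrightarrow> a \<in> subtree a"
  unfolding subtree_def by (auto intro: exI[of _ 0])

lemma subtree_root: "subtree l = V"
  unfolding subtree_def using parent_pow_depth by blast

lemma childrenD:
  "c \<in> children a \<Longrightarrow> c \<in> V \<and> c \<noteq> l \<and> parent c = a \<and> a \<in> V \<and> c \<in> nbrs E a \<and> depth c = depth a + 1"
  unfolding children_def using parent_in_V parent_in_nbrs depth_parent nbrs_sym by auto

lemma parent_in_subtree: "y \<in> subtree a \<Longrightarrow> y \<noteq> a \<Longrightarrow> parent y \<in> subtree a"
proof -
  assume "y \<in> subtree a" "y \<noteq> a"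
  then obtain k where k: "y \<in> V" "(parent ^^ k) y = a" by (auto simp: subtree_def)
  with \<open>y \<noteq> a\<close> obtain j where "k = Suc j" by (cases k) auto
  then have "(parent ^^ j) (parent y) = a" using k by (simp add: funpow_Suc_right del: funpow.simps)
  then show ?thesis using parent_in_V k by (auto simp: subtree_def)
qed

lemma subtree_decomp: "a \<in> V \<Longrightarrow> subtree a = insert a (\<Union>c \<in> children a. subtree c)"
proof (rule set_eqI, rule iffI)
  fix x assume a: "a \<in> V" and x: "x \<in> subtree a"
  then have xV: "x \<in> V" and ex: "\<exists>k. (parent ^^ k) x = a" by (auto simp: subtree_def)
  define k where "k = (LEAST k. (parent ^^ k) x = a)"
  have k: "(parent ^^ k) x = a" unfolding k_def using ex by (rule LeastI_ex)
  show "x \<in> insert a (\<Union>c \<in> children a. subtree c)"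
  proof (cases k)
    case 0 then show ?thesis using k by simp
  next
    case (Suc j)
    let ?c = "(parent ^^ j) x"
    have "?c \<noteq> a" using Suc k_def not_less_Least[of j "\<lambda>k. (parent ^^ k) x = a"]
      by auto
    moreover have pc: "parent ?c = a" using k Suc by simp
    ultimately have "?c \<noteq> l" by auto
    then have "?c \<in> children a" using pc parent_pow_in_V[OF xV] by (auto simp: children_def)
    moreover have "x \<in> subtree ?c" using xV by (auto simp: subtree_def)
    ultimately show ?thesis by blast
  qed
next
  fix x assume a: "a \<in> V" and x: "x \<in> insert a (\<Union>c \<in> children a. subtree c)"
  show "x \<in> subtree a"
  proof (cases "x = a")
    case True then show ?thesis using a self_in_subtree by simp
  next
    case False
    then obtain c k where c: "c \<in> children a" "x \<in> V" "(parent ^^ k) x = c"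
      using x by (auto simp: subtree_def)
    then have "(parent ^^ (Suc k)) x = a" by (simp add: children_def)
    then show ?thesis using c(2) unfolding subtree_def by blast
  qed
qed

lemma subtree_depth_ge: "x \<in> subtree a \<Longrightarrow> a \<noteq> l \<Longrightarrow> depth a \<le> depth x"
  unfolding subtree_def using depth_parent_pow_eq by fastforce

lemma subtree_children_disjoint:
  "c1 \<in> children a \<Longrightarrow> c2 \<in> children a \<Longrightarrow> c1 \<noteq> c2 \<Longrightarrow> subtree c1 \<inter> subtree c2 = {}"
proof (rule ccontr)
  assume c: "c1 \<in> children a" "c2 \<in> children a" "c1 \<noteq> c2"
    "subtree c1 \<inter> subtree c2 \<noteq> {}"
  then obtain x i j where x: "x \<in> V" "(parent ^^ i) x = c1" "(parent ^^ j) x = c2"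
    by (auto simp: subtree_def)
  have "depth c1 + i = depth x" "depth c2 + j = depth x"
    using depth_parent_pow_eq x c childrenD by blast+
  moreover have "depth c1 = depth c2" using c childrenD by simp
  ultimately have "i = j" by simp
  then show False using x c by simp
qed

lemma not_in_subtree_child: "c \<in> children a \<Longrightarrow> a \<notin> subtree c"
  using subtree_depth_ge childrenD by fastforce

lemma subtree_child_subset: "c \<in> children a \<Longrightarrow> subtree c \<subseteq> subtree a"
  using subtree_decomp childrenD by blast

lemma subtree_trans:
  assumes "x \<in> subtree y" and "y \<in> subtree z"
  shows "x \<in> subtree z"
proof -
  obtain i j where "x \<in> V" "(parent ^^ i) x = y" "(parent ^^ j) y = z"
    using assms by (auto simp: subtree_def)
  then have "x \<in> V" "(parent ^^ (j + i)) x = z" by (simp_all add: parent_pow_add)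
  then show ?thesis unfolding subtree_def by blast
qed

lemma subtree_antisym:
  assumes "x \<in> subtree y" and "y \<in> subtree x"
  shows "x = y"
proof -
  obtain i j where x: "x \<in> V" and i: "(parent ^^ i) x = y" and j: "(parent ^^ j) y = x"
    using assms by (auto simp: subtree_def)
  show ?thesis
  proof (cases "x = l \<or> y = l")
    case True
    then show ?thesis using i j by auto
  next
    case False
    have "y \<in> V" using i parent_pow_in_V[OF x] by blast
    then have "depth y + i = depth x" "depth x + j = depth y"
      using depth_parent_pow_eq[OF x i] depth_parent_pow_eq[OF _ j] False by auto
    then have "i = 0" by linarith
    then show ?thesis using i by simp
  qed
qed

definition subtree_size :: "nat \<Rightarrow> nat" where "subtree_size a = card (subtree a)"

lemma subtree_size_rec: "a \<in> V \<Longrightarrow> subtree_size a = 1 + (\<Sum>c\<in>children a. subtree_size c)"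
proof -
  assume a: "a \<in> V"
  have "card (\<Union>c \<in> children a. subtree c) = (\<Sum>c\<in>children a. card (subtree c))"
    by (rule card_UN_disjoint)
      (auto simp: finite_children finite_subtree dest: subtree_children_disjoint)
  moreover have "a \<notin> (\<Union>c \<in> children a. subtree c)"
    using not_in_subtree_child by blast
  moreover have "finite (\<Union>c \<in> children a. subtree c)"
    using finite_children finite_subtree by blast
  ultimately show ?thesis unfolding subtree_size_def by (subst subtree_decomp[OF a]) simp
qed

definition max_depth :: "nat \<Rightarrow> nat" where "max_depth a = Max (depth ` subtree a)"
definition height :: nat where "height = Max (depth ` V)"

lemma depth_le_height: "x \<in> V \<Longrightarrow> depth x \<le> height"
  unfolding height_def using finite_V by simp

lemma max_depth_ge: "a \<in> V \<Longrightarrow> depth a \<le> max_depth a"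
  unfolding max_depth_def using finite_subtree self_in_subtree by simp

lemma max_depth_le_height: "a \<in> V \<Longrightarrow> max_depth a \<le> height"
  unfolding max_depth_def using finite_subtree self_in_subtree subtree_subset depth_le_height
    by (subst Max_le_iff) blast+

lemma max_depth_root: "max_depth l = height" by (simp add: max_depth_def height_def subtree_root)

lemma max_depth_child: "c \<in> children a \<Longrightarrow> max_depth c \<le> max_depth a"
proof -
  assume c: "c \<in> children a"
  then have "c \<in> subtree c" using self_in_subtree childrenD by blast
  then show ?thesis unfolding max_depth_def using finite_subtree subtree_child_subset[OF c]
    by (intro Max_mono) auto
qed

lemma max_depth_cases: "a \<in> V \<Longrightarrow> max_depth a = depth a \<or> (\<exists>c\<in>children a. max_depth a = max_depth c)"
proof -
  assume a: "a \<in> V"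
  have "max_depth a \<in> depth ` subtree a" unfolding max_depth_def
    using finite_subtree self_in_subtree[OF a] by (intro Max_in) auto
  then obtain x where x: "x \<in> subtree a" "max_depth a = depth x" by auto
  show ?thesis
  proof (cases "x = a")
    case True then show ?thesis using x by simp
  next
    case False
    then obtain c where c: "c \<in> children a" "x \<in> subtree c"
      using x subtree_decomp[OF a] by auto
    have "depth x \<le> max_depth c" unfolding max_depth_def using c finite_subtree by simp
    then show ?thesis using max_depth_child[OF c(1)] x c by force
  qed
qed

lemma Max_max_depth_children:
  "a \<in> V \<Longrightarrow> Max (insert (depth a) (max_depth ` children a)) = max_depth a"
proof -
  assume a: "a \<in> V"
  show ?thesis
  proof (rule Max_eqI)
    show "finite (insert (depth a) (max_depth ` children a))" using finite_children by simp
    show "y \<le> max_depth a" if "y \<in> insert (depth a) (max_depth ` children a)" for y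
      using that max_depth_ge[OF a] max_depth_child by auto
    show "max_depth a \<in> insert (depth a) (max_depth ` children a)"
      using max_depth_cases[OF a] by auto
  qed
qed

text \<open>The round in which \<open>a\<close> reports its subtree to its parent: it knows its children in round
  \<open>depth a + 2\<close> and must have heard from all of them (\<open>upcast_round_le_iff\<close>).\<close>

definition upcast_round :: "nat \<Rightarrow> nat" where
  "upcast_round a = 2 * max_depth a - depth a + 2"

lemma upcast_round_le_iff:
  "a \<in> V \<Longrightarrow> (upcast_round a \<le> t \<longleftrightarrow> depth a + 2 \<le> t \<and> (\<forall>c\<in>children a. upcast_round c < t))"
proof -
  assume a: "a \<in> V"
  have mc: "\<And>c. c \<in> children a
    \<Longrightarrow> depth a + 1 \<le> max_depth c \<and> max_depth c \<le> max_depth a"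
    using max_depth_child childrenD max_depth_ge by fastforce
  show ?thesis
  proof
    assume "upcast_round a \<le> t"
    then show "depth a + 2 \<le> t \<and> (\<forall>c\<in>children a. upcast_round c < t)"
      using max_depth_ge[OF a] mc childrenD unfolding upcast_round_def by fastforce
  next
    assume h: "depth a + 2 \<le> t \<and> (\<forall>c\<in>children a. upcast_round c < t)"
    show "upcast_round a \<le> t"
    proof (cases "max_depth a = depth a")
      case True then show ?thesis using h unfolding upcast_round_def by simp
    next
      case False
      then obtain c where c: "c \<in> children a" "max_depth a = max_depth c"
        using max_depth_cases[OF a] by auto
      then show ?thesis using h mc[OF c(1)] childrenD[OF c(1)]
        unfolding upcast_round_def by fastforce
    qed
  qed
qed

lemma upcast_round_root: "upcast_round l = 2 * height + 2"
  by (simp add: upcast_round_def max_depth_root depth_root)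

lemma upcast_round_ge: "a \<in> V \<Longrightarrow> depth a + 2 \<le> upcast_round a"
  using max_depth_ge unfolding upcast_round_def by fastforce
lemma upcast_round_le: "a \<in> V \<Longrightarrow> upcast_round a \<le> 2 * height - depth a + 2"
  using max_depth_le_height max_depth_ge unfolding upcast_round_def by fastforce

section \<open>Preorder numbering\<close>

text \<open>The recursion runs over the depth,
  which decreases along parent links (\<open>preorder_rec\<close>); \<open>label\<close> below is defined likewise.\<close>

primrec preorder_aux :: "nat \<Rightarrow> nat \<Rightarrow> nat" where
  "preorder_aux 0 x = 0"
| "preorder_aux (Suc k) x = preorder_aux k (parent x) + 1
  + (\<Sum>c\<in>{c \<in> children (parent x). c < x}. subtree_size c)"

definition preorder :: "nat \<Rightarrow> nat" where "preorder x = preorder_aux (depth x) x"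

lemma preorder_root: "preorder l = 0" by (simp add: preorder_def depth_root)

lemma preorder_rec:
  "c \<in> V \<Longrightarrow> c \<noteq> l
    \<Longrightarrow> preorder c
      = preorder (parent c) + 1 + (\<Sum>c'\<in>{c' \<in> children (parent c). c' < c}. subtree_size c')"
proof -
  assume c: "c \<in> V" "c \<noteq> l"
  then have "depth c = Suc (depth (parent c))" using depth_parent by simp
  then show ?thesis by (simp add: preorder_def)
qed

lemma preorder_image_subtree:
  "a \<in> V \<Longrightarrow> preorder ` subtree a = {preorder a ..< preorder a + subtree_size a}"
proof (induction "height - depth a" arbitrary: a rule: less_induct)
  case less
  have IH: "preorder ` subtree c = {preorder c ..< preorder c + subtree_size c}" if c:
    "c \<in> children a" for c
  proof -
    have "c \<in> V" "depth c = depth a + 1" using childrenD[OF c] by auto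
    moreover have "depth c \<le> height" using childrenD[OF c] depth_le_height by blast
    ultimately show ?thesis using less by simp
  qed
  let ?S = "\<lambda>c. (\<Sum>c'\<in>{c'\<in>children a. c' < c}. subtree_size c')"
  have pc: "preorder c = preorder a + 1 + ?S c" if "c \<in> children a" for c
    using preorder_rec childrenD[OF that] by auto
  have "preorder ` subtree a = insert (preorder a) (\<Union>c\<in>children a. preorder ` subtree c)"
    by (subst subtree_decomp[OF less.prems]) auto
  also have "\<dots> = insert (preorder a)
    (\<Union>c\<in>children a. {preorder a + 1 + ?S c ..< preorder a + 1 + ?S c + subtree_size c})"
    using IH pc by auto
  also have "\<dots> = insert (preorder a)
    {preorder a + 1 ..< preorder a + 1 + sum subtree_size (children a)}"
    using UN_consecutive_intervals[OF finite_children, of "preorder a + 1" subtree_size a] by simp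
  also have "\<dots> = {preorder a ..< preorder a + subtree_size a}"
    using subtree_size_rec[OF less.prems] by auto
  finally show ?case .
qed

lemma subtree_size_root: "subtree_size l = card V" by (simp add: subtree_size_def subtree_root)

lemma preorder_image: "preorder ` V = {..< card V}"
  using preorder_image_subtree[OF root_in_V]
    by (simp add: subtree_root preorder_root subtree_size_root lessThan_atLeast0)

lemma inj_on_preorder: "inj_on preorder V"
  using preorder_image finite_V by (simp add: eq_card_imp_inj_on)

lemma preorder_less: "y \<in> V \<Longrightarrow> preorder y < card V"
  using preorder_image by auto

lemma subtree_iff_preorder:
  "a \<in> V \<Longrightarrow> y \<in> V \<Longrightarrow> y \<in> subtree a
    \<longleftrightarrow> preorder a \<le> preorder y \<and> preorder y < preorder a + subtree_size a"
proof
  assume a: "a \<in> V" and y: "y \<in> V"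
  show "y \<in> subtree a \<Longrightarrow> preorder a \<le> preorder y
    \<and> preorder y < preorder a + subtree_size a" using preorder_image_subtree[OF a] by auto
  assume "preorder a \<le> preorder y \<and> preorder y < preorder a + subtree_size a"
  then have "preorder y \<in> preorder ` subtree a" using preorder_image_subtree[OF a] by auto
  then obtain z where z: "z \<in> subtree a" "preorder z = preorder y" by auto
  then have "z = y" using inj_on_preorder y subtree_subset by (auto dest: inj_onD)
  then show "y \<in> subtree a" using z by simp
qed

section \<open>Bridges of the BFS tree\<close>

definition nbr_preorders :: "nat \<Rightarrow> nat set" where
  "nbr_preorders y = preorder ` insert y (nbrs E y - {parent y})"
definition low :: "nat \<Rightarrow> nat" where
  "low a = Min (\<Union>y\<in>subtree a. nbr_preorders y)"
definition high :: "nat \<Rightarrow> nat" where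
  "high a = Max (\<Union>y\<in>subtree a. nbr_preorders y)"
text \<open>The bridge test of the algorithm; by \<open>parent_bridge_iff\<close> it says that the tree edge
  \<open>{parent a, a}\<close> is the only edge leaving the subtree of \<open>a\<close>.\<close>

definition parent_bridge :: "nat \<Rightarrow> bool" where
  "parent_bridge a \<longleftrightarrow> preorder a \<le> low a \<and> high a < preorder a + subtree_size a"

lemma finite_nbr_preorders: "finite (nbr_preorders y)"
  using finite_nbrs by (simp add: nbr_preorders_def)
lemma finite_subtree_nbr_preorders: "finite (\<Union>y\<in>subtree a. nbr_preorders y)"
  using finite_nbr_preorders finite_subtree by blast
lemma subtree_nbr_preorders_nonempty: "a \<in> V \<Longrightarrow> (\<Union>y\<in>subtree a. nbr_preorders y) \<noteq> {}"
  using self_in_subtree by (auto simp: nbr_preorders_def)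

lemma parent_bridge_preorder_iff:
  "a \<in> V \<Longrightarrow> parent_bridge a
    \<longleftrightarrow> (\<forall>y\<in>subtree a. \<forall>z \<in> insert y (nbrs E y - {parent y}). preorder a \<le> preorder z
      \<and> preorder z < preorder a + subtree_size a)"
  unfolding parent_bridge_def low_def high_def
    using finite_subtree_nbr_preorders subtree_nbr_preorders_nonempty
  by (auto simp: Min_ge_iff Max_less_iff nbr_preorders_def)

lemma edge_in_V: "{y,z} \<in> E \<Longrightarrow> y \<in> V \<and> z \<in> V \<and> y \<noteq> z"
  using nbrsD[of y z] by (simp add: nbrs_def)

lemma parent_bridge_closed_iff:
  assumes a: "a \<in> V"
  shows "parent_bridge a \<longleftrightarrow>
    (\<forall>y\<in>subtree a. \<forall>z \<in> nbrs E y - {parent y}. z \<in> subtree a)"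
proof -
  have "z \<in> subtree a \<longleftrightarrow> preorder a \<le> preorder z
    \<and> preorder z < preorder a + subtree_size a"
    if "y \<in> subtree a" "z \<in> insert y (nbrs E y - {parent y})" for y z
    using that subtree_subset nbrsD subtree_iff_preorder[OF a] by blast
  then have "parent_bridge a \<longleftrightarrow>
      (\<forall>y\<in>subtree a. \<forall>z \<in> insert y (nbrs E y - {parent y}). z \<in> subtree a)"
    unfolding parent_bridge_preorder_iff[OF a] by (intro ball_cong refl) simp
  then show ?thesis by auto
qed

lemma parent_bridge_iff:
  "a \<in> V \<Longrightarrow> a \<noteq> l \<Longrightarrow> parent_bridge a
    \<longleftrightarrow> (\<forall>y z. {y,z} \<in> E \<and> {y,z} \<noteq> {parent a, a} \<and> y \<in> subtree a \<longrightarrow> z \<in> subtree a)"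
proof -
  assume a: "a \<in> V" "a \<noteq> l"
  show ?thesis
  proof
    assume b: "parent_bridge a"
    show "\<forall>y z. {y,z} \<in> E \<and> {y,z} \<noteq> {parent a, a} \<and> y \<in> subtree a \<longrightarrow> z \<in> subtree a"
    proof (intro allI impI)
      fix y z assume h: "{y,z} \<in> E \<and> {y,z} \<noteq> {parent a, a} \<and> y \<in> subtree a"
      show "z \<in> subtree a"
      proof (cases "z = parent y")
        case True
        then have "y \<noteq> a" using h by (auto simp: insert_commute)
        then show ?thesis using True h parent_in_subtree by blast
      next
        case False
        then have "z \<in> nbrs E y - {parent y}" using h by (simp add: nbrs_def insert_commute)
        then show ?thesis using b parent_bridge_closed_iff[OF a(1)] h by blast
      qed
    qed
  next
    assume h: "\<forall>y z. {y,z} \<in> E \<and> {y,z} \<noteq> {parent a, a}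
      \<and> y \<in> subtree a \<longrightarrow> z \<in> subtree a"
    have "\<forall>y\<in>subtree a. \<forall>z \<in> nbrs E y - {parent y}. z \<in> subtree a"
    proof (intro ballI)
      fix y z assume y: "y \<in> subtree a" and z: "z \<in> nbrs E y - {parent y}"
      then have e: "{y,z} \<in> E" by (simp add: nbrs_def insert_commute)
      show "z \<in> subtree a"
      proof (cases "{y,z} = {parent a, a}")
        case True
        then have "(y = parent a \<and> z = a) \<or> (y = a \<and> z = parent a)"
          by (auto simp: doubleton_eq_iff)
        then show ?thesis using z self_in_subtree a by auto
      next
        case False then show ?thesis using h e y by blast
      qed
    qed
    then show "parent_bridge a" using parent_bridge_closed_iff[OF a(1)] by simp
  qed
qed

lemma subtree_nbr_preorders_decomp:
  "a \<in> V
    \<Longrightarrow> (\<Union>y\<in>subtree a. nbr_preorders y)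
      = nbr_preorders a \<union> (\<Union>c\<in>children a. (\<Union>y\<in>subtree c. nbr_preorders y))"
  by (subst subtree_decomp) auto

lemma low_rec:
  "a \<in> V
    \<Longrightarrow> low a = Min (insert (preorder a) (preorder ` (nbrs E a - {parent a})) \<union> low ` children a)"
proof -
  assume a: "a \<in> V"
  have "low a = Min (nbr_preorders a
    \<union> (\<lambda>c. Min (\<Union>y\<in>subtree c. nbr_preorders y)) ` children a)"
    unfolding low_def using a finite_nbr_preorders finite_children finite_subtree_nbr_preorders
      subtree_nbr_preorders_nonempty childrenD
    by (subst subtree_nbr_preorders_decomp[OF a], intro Min_Un_UN) (auto simp: nbr_preorders_def)
  then show ?thesis by (simp add: nbr_preorders_def low_def)
qed

lemma high_rec:
  "a \<in> V
    \<Longrightarrow> high a = Max (insert (preorder a) (preorder ` (nbrs E a - {parent a})) \<union> high ` children a)"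
proof -
  assume a: "a \<in> V"
  have "high a = Max (nbr_preorders a
    \<union> (\<lambda>c. Max (\<Union>y\<in>subtree c. nbr_preorders y)) ` children a)"
    unfolding high_def using a finite_nbr_preorders finite_children finite_subtree_nbr_preorders
      subtree_nbr_preorders_nonempty childrenD
    by (subst subtree_nbr_preorders_decomp[OF a], intro Max_Un_UN) (auto simp: nbr_preorders_def)
  then show ?thesis by (simp add: nbr_preorders_def high_def)
qed

lemma low_lt: "a \<in> V \<Longrightarrow> low a < card V"
proof -
  assume a: "a \<in> V"
  have "low a \<in> (\<Union>y\<in>subtree a. nbr_preorders y)" unfolding low_def
    using finite_subtree_nbr_preorders subtree_nbr_preorders_nonempty[OF a] by (rule Min_in)
  moreover have "(\<Union>y\<in>subtree a. nbr_preorders y) \<subseteq> preorder ` V"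
    using subtree_subset nbrsD by (auto simp: nbr_preorders_def)
  ultimately show ?thesis using preorder_less by auto
qed

lemma high_lt: "a \<in> V \<Longrightarrow> high a < card V"
proof -
  assume a: "a \<in> V"
  have "high a \<in> (\<Union>y\<in>subtree a. nbr_preorders y)" unfolding high_def
    using finite_subtree_nbr_preorders subtree_nbr_preorders_nonempty[OF a] by (rule Max_in)
  moreover have "(\<Union>y\<in>subtree a. nbr_preorders y) \<subseteq> preorder ` V"
    using subtree_subset nbrsD by (auto simp: nbr_preorders_def)
  ultimately show ?thesis using preorder_less by auto
qed

lemma tree_edge_inj: "y \<in> V \<Longrightarrow> w \<in> V \<Longrightarrow> w \<noteq> l \<Longrightarrow> {parent y, y} = {parent w, w} \<Longrightarrow> y = w"
proof (rule ccontr)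
  assume a: "y \<in> V" "w \<in> V" "w \<noteq> l" "{parent y, y} = {parent w, w}" "y \<noteq> w"
  then have yw: "y = parent w" "parent y = w" by (auto simp: doubleton_eq_iff)
  then have "y \<noteq> l" using a by auto
  then show False using depth_parent[OF a(1)] depth_parent[OF a(2) a(3)] yw by simp
qed

lemma path_up_avoiding:
  "x \<in> V \<Longrightarrow> (\<forall>j<k. (parent ^^ j) x \<noteq> l \<longrightarrow> {parent ((parent ^^ j) x), (parent ^^ j) x} \<noteq> e)
    \<Longrightarrow> (x, (parent ^^ k) x) \<in> (adj (E - {e}))\<^sup>*"
proof (induct k)
  case 0 then show ?case by simp
next
  case (Suc k)
  let ?y = "(parent ^^ k) x"
  have r: "(x, ?y) \<in> (adj (E - {e}))\<^sup>*" using Suc by auto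
  show ?case
  proof (cases "?y = l")
    case True then show ?thesis using r by simp
  next
    case False
    have "{parent ?y, ?y} \<in> E" using parent_spec parent_pow_in_V Suc.prems(1) False by blast
    moreover have "{parent ?y, ?y} \<noteq> e" using Suc.prems(2) False by auto
    ultimately have "(?y, parent ?y) \<in> adj (E - {e})" by (simp add: adj_def insert_commute)
    then show ?thesis using r by simp
  qed
qed

lemma outside_subtree_reaches_root:
  "w \<in> V \<Longrightarrow> w \<noteq> l \<Longrightarrow> x \<in> V \<Longrightarrow> x \<notin> subtree w \<Longrightarrow> (x, l) \<in> (adj (E - {{parent w, w}}))\<^sup>*"
proof -
  assume a: "w \<in> V" "w \<noteq> l" "x \<in> V" "x \<notin> subtree w"
  have "\<forall>j<depth x. (parent ^^ j) x \<noteq> l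
    \<longrightarrow> {parent ((parent ^^ j) x), (parent ^^ j) x} \<noteq> {parent w, w}"
  proof (intro allI impI)
    fix j assume "j < depth x" "(parent ^^ j) x \<noteq> l"
    have "(parent ^^ j) x \<noteq> w" using a by (auto simp: subtree_def)
    then show "{parent ((parent ^^ j) x), (parent ^^ j) x} \<noteq> {parent w, w}"
      using tree_edge_inj parent_pow_in_V a by blast
  qed
  then have "(x, (parent ^^ depth x) x) \<in> (adj (E - {{parent w, w}}))\<^sup>*"
    by (rule path_up_avoiding[OF a(3)])
  then show ?thesis using parent_pow_depth[OF a(3)] by simp
qed

lemma reaches_root_avoiding_non_tree_edge:
  "x \<in> V \<Longrightarrow> (\<forall>w\<in>V. w \<noteq> l \<longrightarrow> e \<noteq> {parent w, w}) \<Longrightarrow> (x, l) \<in> (adj (E - {e}))\<^sup>*"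
proof -
  assume a: "x \<in> V" "\<forall>w\<in>V. w \<noteq> l \<longrightarrow> e \<noteq> {parent w, w}"
  have "\<forall>j<depth x. (parent ^^ j) x \<noteq> l
    \<longrightarrow> {parent ((parent ^^ j) x), (parent ^^ j) x} \<noteq> e"
  proof (intro allI impI)
    fix j assume "j < depth x" "(parent ^^ j) x \<noteq> l"
    then show "{parent ((parent ^^ j) x), (parent ^^ j) x} \<noteq> e"
      using a(2) parent_pow_in_V[OF a(1), of j] by blast
  qed
  then have "(x, (parent ^^ depth x) x) \<in> (adj (E - {e}))\<^sup>*"
    by (rule path_up_avoiding[OF a(1)])
  then show ?thesis using parent_pow_depth[OF a(1)] by simp
qed

lemma subtree_reaches_top: "w \<in> V \<Longrightarrow> w \<noteq> l \<Longrightarrow> x \<in> subtree w \<Longrightarrow> (x, w) \<in> (adj (E - {{parent w, w}}))\<^sup>*"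
proof -
  assume a: "w \<in> V" "w \<noteq> l" "x \<in> subtree w"
  then have xV: "x \<in> V" and ex: "\<exists>k. (parent ^^ k) x = w" by (auto simp: subtree_def)
  define k where "k = (LEAST k. (parent ^^ k) x = w)"
  have k: "(parent ^^ k) x = w" unfolding k_def using ex by (rule LeastI_ex)
  have "\<forall>j<k. (parent ^^ j) x \<noteq> l
    \<longrightarrow> {parent ((parent ^^ j) x), (parent ^^ j) x} \<noteq> {parent w, w}"
  proof (intro allI impI)
    fix j assume j: "j < k" "(parent ^^ j) x \<noteq> l"
    have "(parent ^^ j) x \<noteq> w" using j(1) k_def not_less_Least by blast
    then show "{parent ((parent ^^ j) x), (parent ^^ j) x} \<noteq> {parent w, w}"
      using tree_edge_inj parent_pow_in_V xV a by blast
  qed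
  then have "(x, (parent ^^ k) x) \<in> (adj (E - {{parent w, w}}))\<^sup>*"
    by (rule path_up_avoiding[OF xV])
  then show ?thesis using k by simp
qed

lemma reaches_root_avoiding_non_bridge:
  "e \<in> E \<Longrightarrow> \<not>(\<exists>w\<in>V. w \<noteq> l \<and> e = {parent w, w} \<and> parent_bridge w) \<Longrightarrow> x \<in> V
    \<Longrightarrow> (x, l) \<in> (adj (E - {e}))\<^sup>*"
proof -
  assume e: "e \<in> E" and nb:
    "\<not>(\<exists>w\<in>V. w \<noteq> l \<and> e = {parent w, w} \<and> parent_bridge w)" and x: "x \<in> V"
  show ?thesis
  proof (cases "\<exists>w\<in>V. w \<noteq> l \<and> e = {parent w, w}")
    case False then show ?thesis using reaches_root_avoiding_non_tree_edge x by blast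
  next
    case True
    then obtain w where w: "w \<in> V" "w \<noteq> l" "e = {parent w, w}" by blast
    then have "\<not> parent_bridge w" using nb by blast
    then obtain y z where yz: "{y,z} \<in> E" "{y,z} \<noteq> e" "y \<in> subtree w" "z \<notin> subtree w"
      using parent_bridge_iff[OF w(1,2)] w(3) by blast
    have zV: "z \<in> V" using yz(1) edge_in_V by blast
    have c1: "(z, l) \<in> (adj (E - {e}))\<^sup>*"
      using outside_subtree_reaches_root[OF w(1,2) zV yz(4)] w(3) by simp
    have c2: "(y, z) \<in> adj (E - {e})" using yz by (simp add: adj_def)
    have c3: "(y, w) \<in> (adj (E - {e}))\<^sup>*"
      using subtree_reaches_top[OF w(1,2) yz(3)] w(3) by simp
    have wl: "(w, l) \<in> (adj (E - {e}))\<^sup>*"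
      by (rule rtrancl_trans[OF rtrancl_trans[OF adj_rtrancl_sym[OF c3] r_into_rtrancl[OF c2]] c1])
    show ?thesis
    proof (cases "x \<in> subtree w")
      case True then show ?thesis using subtree_reaches_top[OF w(1,2) True] wl w(3) by simp
    next
      case False then show ?thesis using outside_subtree_reaches_root[OF w(1,2) x] w(3) by simp
    qed
  qed
qed

lemma parent_bridge_separates:
  "w \<in> V \<Longrightarrow> w \<noteq> l \<Longrightarrow> parent_bridge w \<Longrightarrow> (u,v) \<in> (adj (E - {{parent w, w}}))\<^sup>* \<Longrightarrow> u \<in> subtree w
    \<Longrightarrow> v \<in> subtree w"
proof -
  assume w: "w \<in> V" "w \<noteq> l" "parent_bridge w"
    and r: "(u,v) \<in> (adj (E - {{parent w, w}}))\<^sup>*"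
  show "u \<in> subtree w \<Longrightarrow> v \<in> subtree w"
    using r
  proof (induct rule: rtrancl_induct)
    case base then show ?case .
  next
    case (step y z)
    then have "{y,z} \<in> E" "{y,z} \<noteq> {parent w, w}" by (auto simp: adj_def)
    then show ?case using step parent_bridge_iff[OF w(1,2)] w(3) by blast
  qed
qed

definition bridge_ancestors :: "nat \<Rightarrow> nat set" where
  "bridge_ancestors x = {w \<in> V. w \<noteq> l \<and> parent_bridge w \<and> x \<in> subtree w}"

lemma edge_biconn_imp_bridge_ancestors_eq:
  assumes "edge_biconn V E u v"
  shows "bridge_ancestors u = bridge_ancestors v"
proof -
  have "x \<in> subtree w \<longleftrightarrow> y \<in> subtree w"
    if "(x, y) \<in> (adj (E - {{parent w, w}}))\<^sup>*" "w \<in> V" "w \<noteq> l" "parent_bridge w" for x y w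
    using parent_bridge_separates[OF that(2-4) that(1)]
      parent_bridge_separates[OF that(2-4) adj_rtrancl_sym[OF that(1)]] by blast
  moreover have "(u, v) \<in> (adj (E - {{parent w, w}}))\<^sup>*" if "w \<in> V" "w \<noteq> l" for w
    using assms parent_spec[OF that] by (simp add: edge_biconn_def)
  ultimately show ?thesis unfolding bridge_ancestors_def by blast
qed

lemma reachable_avoiding_edge_if_bridge_ancestors_eq:
  assumes e: "e \<in> E" and u: "u \<in> V" and v: "v \<in> V"
    and eq: "bridge_ancestors u = bridge_ancestors v"
  shows "(u, v) \<in> (adj (E - {e}))\<^sup>*"
proof -
  have "\<exists>x. (u, x) \<in> (adj (E - {e}))\<^sup>* \<and> (v, x) \<in> (adj (E - {e}))\<^sup>*"
  proof (cases "\<exists>w\<in>V. w \<noteq> l \<and> e = {parent w, w} \<and> parent_bridge w")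
    case False
    show ?thesis
      using reaches_root_avoiding_non_bridge[OF e False u]
        reaches_root_avoiding_non_bridge[OF e False v]
      by blast
  next
    case True
    then obtain w where w: "w \<in> V" "w \<noteq> l" "e = {parent w, w}" "parent_bridge w" by blast
    then have same_side: "u \<in> subtree w \<longleftrightarrow> v \<in> subtree w"
      using eq unfolding bridge_ancestors_def by blast
    show ?thesis
    proof (cases "u \<in> subtree w")
      case True
      then show ?thesis
        using subtree_reaches_top[OF w(1,2) True] subtree_reaches_top[OF w(1,2)] same_side w(3)
        by blast
    next
      case False
      then show ?thesis
        using outside_subtree_reaches_root[OF w(1,2) u False]
          outside_subtree_reaches_root[OF w(1,2) v] same_side w(3) by blast
    qed
  qed
  then obtain x where ux: "(u, x) \<in> (adj (E - {e}))\<^sup>*"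
    and vx: "(v, x) \<in> (adj (E - {e}))\<^sup>*"
    by blast
  show ?thesis using rtrancl_trans[OF ux adj_rtrancl_sym[OF vx]] .
qed

lemma edge_biconn_iff_bridge_ancestors_eq:
  assumes "u \<in> V" and "v \<in> V"
  shows "edge_biconn V E u v \<longleftrightarrow> bridge_ancestors u = bridge_ancestors v"
proof
  assume "edge_biconn V E u v"
  then show "bridge_ancestors u = bridge_ancestors v" by (rule edge_biconn_imp_bridge_ancestors_eq)
next
  assume "bridge_ancestors u = bridge_ancestors v"
  then show "edge_biconn V E u v"
    using assms reachable_avoiding_edge_if_bridge_ancestors_eq unfolding edge_biconn_def by blast
qed

section \<open>Labels\<close>

primrec label_aux :: "nat \<Rightarrow> nat \<Rightarrow> nat" where
  "label_aux 0 x = x"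
| "label_aux (Suc k) x = (if parent_bridge x then x else label_aux k (parent x))"

definition label :: "nat \<Rightarrow> nat" where "label x = label_aux (depth x) x"

lemma label_root: "label l = l" by (simp add: label_def depth_root)

lemma label_rec: "c \<in> V \<Longrightarrow> c \<noteq> l \<Longrightarrow> label c = (if parent_bridge c then c else label (parent c))"
proof -
  assume c: "c \<in> V" "c \<noteq> l"
  then have "depth c = Suc (depth (parent c))" using depth_parent by simp
  then show ?thesis by (simp add: label_def)
qed

lemma label_ancestor:
  "x \<in> V
    \<Longrightarrow> \<exists>k. (parent ^^ k) x = label x \<and> (\<forall>j<k. \<not> parent_bridge ((parent ^^ j) x))
      \<and> (label x = l \<or> parent_bridge (label x))"
proof (induction "depth x" arbitrary: x)
  case 0
  then have "x = l" using depth_eq_0_iff by simp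
  then show ?case using label_root by (intro exI[of _ 0]) simp
next
  case (Suc d)
  then have xl: "x \<noteq> l" using depth_root by auto
  show ?case
  proof (cases "parent_bridge x")
    case True
    then show ?thesis using label_rec[OF Suc.prems xl] by (intro exI[of _ 0]) simp
  next
    case False
    have "d = depth (parent x)" using Suc.hyps depth_parent[OF Suc.prems xl] by simp
    then obtain k where k: "(parent ^^ k) (parent x) = label (parent x)"
      "\<forall>j<k. \<not> parent_bridge ((parent ^^ j) (parent x))"
       "label (parent x) = l \<or> parent_bridge (label (parent x))"
      using Suc.hyps(1)[of "parent x"] parent_in_V[OF Suc.prems] by blast
    have l: "label x = label (parent x)" using label_rec[OF Suc.prems xl] False by simp
    have "\<forall>j<Suc k. \<not> parent_bridge ((parent ^^ j) x)"
    proof (intro allI impI)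
      fix j assume "j < Suc k"
      then show "\<not> parent_bridge ((parent ^^ j) x)"
        using k(2) False by (cases j) (auto simp: funpow_Suc_right simp del: funpow.simps)
    qed
    moreover have "(parent ^^ Suc k) x = label x"
      using k(1) l by (simp add: funpow_Suc_right del: funpow.simps)
    ultimately show ?thesis using k(3) l by metis
  qed
qed

lemma label_in_V: "x \<in> V \<Longrightarrow> label x \<in> V"
  using label_ancestor parent_pow_in_V by metis

lemma bridge_ancestors_root: "bridge_ancestors l = {}"
  unfolding bridge_ancestors_def subtree_def by auto

lemma bridge_ancestors_label:
  assumes x: "x \<in> V"
  shows "bridge_ancestors (label x) = bridge_ancestors x"
proof -
  obtain k where k: "(parent ^^ k) x = label x"
    and below: "\<forall>j<k. \<not> parent_bridge ((parent ^^ j) x)"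
    using label_ancestor[OF x] by blast
  have x_below: "x \<in> subtree (label x)" using k x by (auto simp: subtree_def)
  have "label x \<in> subtree w \<longleftrightarrow> x \<in> subtree w" if "parent_bridge w" for w
  proof
    assume "label x \<in> subtree w"
    then show "x \<in> subtree w" using x_below subtree_trans by blast
  next
    assume "x \<in> subtree w"
    then obtain i where i: "(parent ^^ i) x = w" by (auto simp: subtree_def)
    have "k \<le> i" using below i that not_le by blast
    then have "(parent ^^ (i - k)) (label x) = w" using parent_pow_diff[OF k i] by simp
    then show "label x \<in> subtree w" using label_in_V[OF x] by (auto simp: subtree_def)
  qed
  then show ?thesis unfolding bridge_ancestors_def by blast
qed

lemma label_in_bridge_ancestors:
  assumes x: "x \<in> V" and "label x \<noteq> l"
  shows "label x \<in> bridge_ancestors x"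
proof -
  have "parent_bridge (label x)" using label_ancestor[OF x] assms(2) by blast
  then have "label x \<in> bridge_ancestors (label x)"
    using assms label_in_V self_in_subtree unfolding bridge_ancestors_def by blast
  then show ?thesis using bridge_ancestors_label[OF x] by simp
qed

lemma label_eq_root_iff:
  assumes "x \<in> V"
  shows "label x = l \<longleftrightarrow> bridge_ancestors x = {}"
proof
  assume "label x = l"
  then show "bridge_ancestors x = {}"
    using bridge_ancestors_label[OF assms] bridge_ancestors_root by simp
qed (use label_in_bridge_ancestors[OF assms] in blast)

lemma label_eq_iff_bridge_ancestors_eq:
  assumes u: "u \<in> V" and v: "v \<in> V"
  shows "label u = label v \<longleftrightarrow> bridge_ancestors u = bridge_ancestors v"
proof
  assume "label u = label v"
  then show "bridge_ancestors u = bridge_ancestors v" using bridge_ancestors_label u v by metis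
next
  assume eq: "bridge_ancestors u = bridge_ancestors v"
  show "label u = label v"
  proof (cases "label u = l")
    case True
    then show ?thesis using eq label_eq_root_iff u v by metis
  next
    case False
    then have "label v \<noteq> l" using eq label_eq_root_iff u v by metis
    have "label u \<in> bridge_ancestors (label v)" "label v \<in> bridge_ancestors (label u)"
      using label_in_bridge_ancestors[OF u False]
        label_in_bridge_ancestors[OF v \<open>label v \<noteq> l\<close>]
        eq bridge_ancestors_label u v by simp_all
    then show ?thesis using subtree_antisym unfolding bridge_ancestors_def by blast
  qed
qed

theorem label_eq_iff_edge_biconn: "u \<in> V \<Longrightarrow> v \<in> V \<Longrightarrow> label u = label v \<longleftrightarrow> edge_biconn V E u v"
  using label_eq_iff_bridge_ancestors_eq edge_biconn_iff_bridge_ancestors_eq by simp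

end

section \<open>The protocol\<close>

text \<open>What a node knows after some rounds: its identity, whether it is the leader, its neighbours,
  the current round, and its inbox, where \<open>view_inbox w r y\<close> is the message that neighbour \<open>y\<close>
  sent in round \<open>r\<close> (counting from 0). Every message is a tagged pair \<open>prod_encode (k, p)\<close>, the
  tag \<open>k \<in> {1..6}\<close> naming the phase of the protocol.\<close>

type_synonym inbox = "nat \<Rightarrow> nat \<Rightarrow> nat option"

record view =
  view_id :: nat
  view_leader :: bool
  view_nbrs :: "nat set"
  view_round :: nat
  view_inbox :: inbox

definition received :: "inbox \<Rightarrow> nat \<Rightarrow> nat \<Rightarrow> nat \<Rightarrow> nat \<Rightarrow> bool" where
  "received h t y k p \<longleftrightarrow> (\<exists>r<t. h r y = Some (prod_encode (k, p)))"

definition has_received :: "inbox \<Rightarrow> nat \<Rightarrow> nat \<Rightarrow> nat \<Rightarrow> bool" where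
  "has_received h t y k \<longleftrightarrow> (\<exists>p. received h t y k p)"

definition received_value :: "inbox \<Rightarrow> nat \<Rightarrow> nat \<Rightarrow> nat \<Rightarrow> nat" where
  "received_value h t y k = (THE p. received h t y k p)"

lemma received_value_eqI:
  "received h t y k p \<Longrightarrow> (\<And>p'. received h t y k p' \<Longrightarrow> p' = p) \<Longrightarrow> received_value h t y k = p"
  unfolding received_value_def by (rule the_equality)

abbreviation v_value :: "view \<Rightarrow> nat \<Rightarrow> nat \<Rightarrow> nat" where
  "v_value w y k \<equiv> received_value (view_inbox w) (view_round w) y k"

text \<open>Tag 1: BFS flooding, the payload is 1 exactly towards the
  parent; tag 2: convergecast of subtree size and maximal depth; tag 3: the parent sends each
  child its preorder number and the height of the tree; tag 4: all nodes announce their preorder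
  numbers to all neighbours in the same round; tag 5: convergecast of \<open>low\<close> and \<open>high\<close>; tag 6:
  broadcast of the labels.\<close>

definition v_reached :: "view \<Rightarrow> nat \<Rightarrow> bool" where
  "v_reached w t \<longleftrightarrow> view_leader w
    \<or> (\<exists>y\<in>view_nbrs w. has_received (view_inbox w) t y 1)"

definition v_depth :: "view \<Rightarrow> nat" where
  "v_depth w = (if view_leader w then 0
     else Suc (LEAST r. \<exists>y p. view_inbox w r y = Some (prod_encode (1, p))))"

definition v_parent :: "view \<Rightarrow> nat" where
  "v_parent w = (if view_leader w then view_id w
     else LEAST y. \<exists>p. view_inbox w (v_depth w - 1) y = Some (prod_encode (1, p)))"

definition v_children :: "view \<Rightarrow> nat \<Rightarrow> nat set" where
  "v_children w t = {y. received (view_inbox w) t y 1 1}"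

definition v_ready :: "view \<Rightarrow> nat \<Rightarrow> bool" where
  "v_ready w t \<longleftrightarrow> v_reached w t \<and> v_depth w + 2 \<le> t \<and>
     (\<forall>c\<in>v_children w t. has_received (view_inbox w) t c 2)"

definition v_size :: "view \<Rightarrow> nat" where
  "v_size w = 1 + (\<Sum>c\<in>v_children w (view_round w). fst (prod_decode (v_value w c 2)))"

definition v_max_depth :: "view \<Rightarrow> nat" where
  "v_max_depth w = Max (insert (v_depth w)
     ((\<lambda>c. snd (prod_decode (v_value w c 2))) ` v_children w (view_round w)))"

definition v_informed :: "view \<Rightarrow> bool" where
  "v_informed w \<longleftrightarrow> (if view_leader w then v_ready w (view_round w)
     else v_reached w (view_round w)
       \<and> has_received (view_inbox w) (view_round w) (v_parent w) 3)"

definition v_height :: "view \<Rightarrow> nat" where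
  "v_height w = (if view_leader w then v_max_depth w
     else snd (prod_decode (v_value w (v_parent w) 3)))"

definition v_preorder :: "view \<Rightarrow> nat" where
  "v_preorder w = (if view_leader w then 0 else fst (prod_decode (v_value w (v_parent w) 3)))"

definition v_child_preorder :: "view \<Rightarrow> nat \<Rightarrow> nat" where
  "v_child_preorder w c = v_preorder w + 1 +
     (\<Sum>c'\<in>{c' \<in> v_children w (view_round w). c' < c}. fst
       (prod_decode (v_value w c' 2)))"

definition v_low :: "view \<Rightarrow> nat" where
  "v_low w = Min (insert (v_preorder w) ((\<lambda>y. v_value w y 4) ` (view_nbrs w - {v_parent w}))
     \<union> (\<lambda>c. fst (prod_decode (v_value w c 5))) ` v_children w (view_round w))"

definition v_high :: "view \<Rightarrow> nat" where
  "v_high w = Max (insert (v_preorder w)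
    ((\<lambda>y. v_value w y 4) ` (view_nbrs w - {v_parent w}))
     \<union> (\<lambda>c. snd (prod_decode (v_value w c 5))) ` v_children w (view_round w))"

definition v_parent_bridge :: "view \<Rightarrow> bool" where
  "v_parent_bridge w \<longleftrightarrow> v_preorder w \<le> v_low w
    \<and> v_high w < v_preorder w + v_size w"

definition v_label :: "view \<Rightarrow> nat" where
  "v_label w = (if view_leader w
    \<or> v_parent_bridge w then view_id w else v_value w (v_parent w) 6)"

definition v_halted :: "view \<Rightarrow> bool" where
  "v_halted w \<longleftrightarrow> v_informed w \<and> 5 * v_height w + 5 \<le> view_round w"

definition v_msg :: "view \<Rightarrow> nat \<Rightarrow> nat option" where
  "v_msg w v = (let t = view_round w in
     if v_reached w t \<and> t = v_depth w
       then Some (prod_encode (1, if \<not> view_leader w \<and> v = v_parent w then 1 else 0))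
     else if \<not> view_leader w \<and> v_reached w t \<and> v = v_parent w \<and> v_ready w t
       \<and> \<not> v_ready w (t - 1)
       then Some (prod_encode (2, prod_encode (v_size w, v_max_depth w)))
     else if v_informed w \<and> v \<in> v_children w t \<and> t = 2 * v_height w + 2 + v_depth w
       then Some (prod_encode (3, prod_encode (v_child_preorder w v, v_height w)))
     else if v_informed w \<and> t = 3 * v_height w + 3
       then Some (prod_encode (4, v_preorder w))
     else if \<not> view_leader w \<and> v_informed w \<and> v = v_parent w
       \<and> t = 4 * v_height w + 4 - v_depth w
       then Some (prod_encode (5, prod_encode (v_low w, v_high w)))
     else if v_informed w \<and> v \<in> v_children w t \<and> t = 4 * v_height w + 5 + v_depth w
       then Some (prod_encode (6, v_label w))
     else None)"

text \<open>A state of the algorithm must be a list of naturals: it is the single code \<open>to_nat\<close> of the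
  identity, leader flag, neighbour list, round counter and the log of received messages.\<close>

type_synonym state = "nat \<times> bool \<times> nat list \<times> nat \<times> (nat \<times> nat \<times> nat) list"

definition encode_state :: "state \<Rightarrow> nat list" where
  "encode_state w = [to_nat w]"

definition decode_state :: "nat list \<Rightarrow> state" where
  "decode_state s = from_nat (hd s)"

lemma decode_encode_state[simp]: "decode_state (encode_state w) = w"
  by (simp add: encode_state_def decode_state_def)

definition inbox_of_log :: "(nat \<times> nat \<times> nat) list \<Rightarrow> inbox" where
  "inbox_of_log lg r y = (if \<exists>m. (r, y, m) \<in> set lg then Some (THE m. (r, y, m) \<in> set lg) else None)"

definition view_of :: "state \<Rightarrow> view" where
  "view_of w = (case w of (i, lf, ns, t, lg) \<Rightarrow>
     \<lparr>view_id = i, view_leader = lf, view_nbrs = set ns, view_round = t,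
      view_inbox = inbox_of_log lg\<rparr>)"

definition record_round :: "state \<Rightarrow> (nat \<Rightarrow> nat option) \<Rightarrow> state" where
  "record_round w r = (case w of (i, lf, ns, t, lg) \<Rightarrow>
     (i, lf, ns, Suc t, lg @ map (\<lambda>y. (t, y, the (r y))) (filter (\<lambda>y. r y \<noteq> None) ns)))"

definition bridges_alg :: alg where
  "bridges_alg =
    \<lparr>init = (\<lambda>i N lf. encode_state (i, lf, sorted_list_of_set N, 0, [])),
     msg = (\<lambda>s v. v_msg (view_of (decode_state s)) v),
     trans = (\<lambda>s r. encode_state (record_round (decode_state s) r)),
     halted = (\<lambda>s. v_halted (view_of (decode_state s))),
     out = (\<lambda>s. v_label (view_of (decode_state s)))\<rparr>"

lemma run_Suc_halted: "halted A (run A E l n v) \<Longrightarrow> run A E l (Suc n) v = run A E l n v"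
  by (simp add: Let_def)

section \<open>The ideal run\<close>

context rooted_graph begin

text \<open>The messages of the protocol, as computed from the global knowledge of the tree: node \<open>s\<close>
  sends \<open>schedule t s v\<close> to its neighbour \<open>v\<close> in round \<open>t\<close>. With \<open>h = height\<close>, the leader learns
  \<open>h\<close> in round \<open>2h + 2\<close>, every node knows its preorder number by round \<open>3h + 2\<close>, the \<open>low\<close>/\<open>high\<close>
  convergecast starts at the leaves of depth \<open>h\<close> in round \<open>3h + 4\<close>, and the last labels arrive in
  round \<open>5h + 5\<close>.\<close>

definition schedule :: "nat \<Rightarrow> nat \<Rightarrow> nat \<Rightarrow> nat option" where
  "schedule t s v =
    (if t = depth s then Some (prod_encode (1, if s \<noteq> l \<and> v = parent s then 1 else 0))
     else if s \<noteq> l \<and> v = parent s \<and> t = upcast_round s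
       then Some (prod_encode (2, prod_encode (subtree_size s, max_depth s)))
     else if v \<in> children s \<and> t = 2 * height + 2 + depth s
       then Some (prod_encode (3, prod_encode (preorder v, height)))
     else if t = 3 * height + 3 then Some (prod_encode (4, preorder s))
     else if s \<noteq> l \<and> v = parent s \<and> t = 4 * height + 4 - depth s
       then Some (prod_encode (5, prod_encode (low s, high s)))
     else if v \<in> children s \<and> t = 4 * height + 5 + depth s
       then Some (prod_encode (6, label s))
     else None)"

lemma schedule_bounds:
  "s \<in> V
    \<Longrightarrow> depth s \<le> max_depth s \<and> max_depth s \<le> height \<and> depth s \<le> height
      \<and> upcast_round s = 2 * max_depth s - depth s + 2 \<and> (s \<noteq> l \<longrightarrow> 1 \<le> depth s)"
  using max_depth_ge max_depth_le_height depth_le_height upcast_round_def depth_eq_0_iff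
    by fastforce

lemma schedule_bfs_iff:
  "s \<in> V \<Longrightarrow> schedule t s v = Some (prod_encode (1, p))
    \<longleftrightarrow> t = depth s \<and> p = (if s \<noteq> l \<and> v = parent s then 1 else 0)"
  using schedule_bounds[of s] unfolding schedule_def by auto

lemma schedule_size_iff:
  "s \<in> V \<Longrightarrow> schedule t s v = Some (prod_encode (2, p))
    \<longleftrightarrow> s \<noteq> l \<and> v = parent s \<and> t = upcast_round s \<and> p = prod_encode (subtree_size s, max_depth s)"
  using schedule_bounds[of s] unfolding schedule_def by auto

lemma schedule_preorder_iff:
  "s \<in> V \<Longrightarrow> schedule t s v = Some (prod_encode (3, p))
    \<longleftrightarrow> v \<in> children s \<and> t = 2 * height + 2 + depth s \<and> p = prod_encode (preorder v, height)"
  using schedule_bounds[of s] unfolding schedule_def by auto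

lemma schedule_announce_iff:
  "s \<in> V \<Longrightarrow> schedule t s v = Some (prod_encode (4, p)) \<longleftrightarrow> t = 3 * height + 3 \<and> p = preorder s"
  using schedule_bounds[of s] unfolding schedule_def by auto

lemma schedule_low_high_iff:
  "s \<in> V \<Longrightarrow> schedule t s v = Some (prod_encode (5, p))
    \<longleftrightarrow> s \<noteq> l \<and> v = parent s \<and> t = 4 * height + 4 - depth s \<and> p = prod_encode (low s, high s)"
  using schedule_bounds[of s] unfolding schedule_def by auto

lemma schedule_label_iff:
  "s \<in> V \<Longrightarrow> schedule t s v = Some (prod_encode (6, p))
    \<longleftrightarrow> v \<in> children s \<and> t = 4 * height + 5 + depth s \<and> p = label s"
  using schedule_bounds[of s] unfolding schedule_def by auto

definition ideal_inbox :: "nat \<Rightarrow> nat \<Rightarrow> inbox" where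
  "ideal_inbox t x r y = (if r < t \<and> y \<in> nbrs E x then schedule r y x else None)"

definition ideal_view :: "nat \<Rightarrow> nat \<Rightarrow> view" where
  "ideal_view t x =
    \<lparr>view_id = x, view_leader = (x = l), view_nbrs = nbrs E x, view_round = t,
     view_inbox = ideal_inbox t x\<rparr>"

lemma ideal_view_simps[simp]: "view_id (ideal_view t x) = x"
  "view_leader (ideal_view t x) = (x = l)" "view_nbrs (ideal_view t x) = nbrs E x"
  "view_round (ideal_view t x) = t" "view_inbox (ideal_view t x) = ideal_inbox t x"
  by (simp_all add: ideal_view_def)

lemma nbrs_in_V: "y \<in> nbrs E x \<Longrightarrow> y \<in> V" using nbrsD by blast

lemma received_ideal_iff:
  "t' \<le> t \<Longrightarrow> received (ideal_inbox t x) t' y k p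
    \<longleftrightarrow> y \<in> nbrs E x \<and> (\<exists>r<t'. schedule r y x = Some (prod_encode (k, p)))"
proof -
  assume tt: "t' \<le> t"
  show ?thesis
  proof
    assume "received (ideal_inbox t x) t' y k p"
    then obtain r where r: "r < t'" "ideal_inbox t x r y = Some (prod_encode (k, p))"
      unfolding received_def by blast
    then have "y \<in> nbrs E x" "schedule r y x = Some (prod_encode (k, p))"
      unfolding ideal_inbox_def by (auto split: if_splits)
    then show "y \<in> nbrs E x \<and> (\<exists>r<t'. schedule r y x = Some (prod_encode (k, p)))"
      using r(1) by blast
  next
    assume "y \<in> nbrs E x \<and> (\<exists>r<t'. schedule r y x = Some (prod_encode (k, p)))"
    then obtain r where "y \<in> nbrs E x" "r < t'" "schedule r y x = Some (prod_encode (k, p))"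
      by blast
    then show "received (ideal_inbox t x) t' y k p" unfolding received_def ideal_inbox_def
      using tt by (intro exI[of _ r]) auto
  qed
qed

lemma received_bfs_iff:
  assumes "t' \<le> t"
  shows "received (ideal_inbox t x) t' y 1 p
    \<longleftrightarrow> y \<in> nbrs E x \<and> depth y < t'
    \<and> p = (if y \<noteq> l \<and> x = parent y then 1 else 0)"
  unfolding received_ideal_iff[OF assms] using schedule_bfs_iff[OF nbrs_in_V, of y x] by auto
lemma received_size_iff:
  assumes "t' \<le> t"
  shows "received (ideal_inbox t x) t' y 2 p
    \<longleftrightarrow> y \<in> nbrs E x \<and> y \<noteq> l \<and> x = parent y
    \<and> upcast_round y < t' \<and> p = prod_encode (subtree_size y, max_depth y)"
  unfolding received_ideal_iff[OF assms] using schedule_size_iff[OF nbrs_in_V, of y x] by auto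
lemma received_preorder_iff:
  assumes "t' \<le> t"
  shows "received (ideal_inbox t x) t' y 3 p
    \<longleftrightarrow> y \<in> nbrs E x \<and> x \<in> children y
    \<and> 2 * height + 2 + depth y < t' \<and> p = prod_encode (preorder x, height)"
  unfolding received_ideal_iff[OF assms] using schedule_preorder_iff[OF nbrs_in_V, of y x] by auto
lemma received_announce_iff:
  assumes "t' \<le> t"
  shows "received (ideal_inbox t x) t' y 4 p
    \<longleftrightarrow> y \<in> nbrs E x \<and> 3 * height + 3 < t' \<and> p = preorder y"
  unfolding received_ideal_iff[OF assms] using schedule_announce_iff[OF nbrs_in_V, of y x] by auto
lemma received_low_high_iff:
  assumes "t' \<le> t"
  shows "received (ideal_inbox t x) t' y 5 p
    \<longleftrightarrow> y \<in> nbrs E x \<and> y \<noteq> l \<and> x = parent y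
    \<and> 4 * height + 4 - depth y < t' \<and> p = prod_encode (low y, high y)"
  unfolding received_ideal_iff[OF assms] using schedule_low_high_iff[OF nbrs_in_V, of y x] by auto
lemma received_label_iff:
  assumes "t' \<le> t"
  shows "received (ideal_inbox t x) t' y 6 p
    \<longleftrightarrow> y \<in> nbrs E x \<and> x \<in> children y
    \<and> 4 * height + 5 + depth y < t' \<and> p = label y"
  unfolding received_ideal_iff[OF assms] using schedule_label_iff[OF nbrs_in_V, of y x] by auto

lemma children_iff: "y \<in> nbrs E x \<Longrightarrow> (y \<noteq> l \<and> x = parent y) \<longleftrightarrow> y \<in> children x"
  using nbrs_in_V by (auto simp: children_def)

lemma parent_nbr_depth:
  "x \<in> V \<Longrightarrow> x \<noteq> l \<Longrightarrow> parent x \<in> nbrs E x \<and> depth (parent x) = depth x - 1 \<and> 1 \<le> depth x"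
  using parent_in_nbrs depth_parent by fastforce

lemma v_reached_iff:
  assumes x: "x \<in> V" and tt: "t' \<le> t"
  shows "v_reached (ideal_view t x) t' \<longleftrightarrow> depth x \<le> t'"
proof (cases "x = l")
  case True then show ?thesis by (simp add: v_reached_def depth_root)
next
  case False
  have "v_reached (ideal_view t x) t' \<longleftrightarrow> (\<exists>y\<in>nbrs E x. depth y < t')"
    using False received_bfs_iff[OF tt] by (auto simp: v_reached_def has_received_def)
  also have "\<dots> \<longleftrightarrow> depth x \<le> t'"
  proof
    assume "\<exists>y\<in>nbrs E x. depth y < t'"
    then obtain y where "y \<in> nbrs E x" "depth y < t'" by blast
    moreover have "depth x \<le> depth y + 1" using calculation(1) nbrs_sym depth_nbr_le by blast
    ultimately show "depth x \<le> t'" by simp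
  next
    assume "depth x \<le> t'"
    then show "\<exists>y\<in>nbrs E x. depth y < t'"
      using parent_nbr_depth[OF x False] by (intro bexI[of _ "parent x"]) auto
  qed
  finally show ?thesis .
qed

lemma v_depth_eq:
  assumes x: "x \<in> V" and d: "depth x \<le> t"
  shows "v_depth (ideal_view t x) = depth x"
proof (cases "x = l")
  case True then show ?thesis by (simp add: v_depth_def depth_root)
next
  case False
  note pd = parent_nbr_depth[OF x False]
  have "(LEAST r. \<exists>y p. ideal_inbox t x r y = Some (prod_encode (1, p))) = depth x - 1"
  proof (rule Least_equality)
    have "ideal_inbox t x (depth x - 1) (parent x)
      = Some (prod_encode (1, if parent x \<noteq> l \<and> x = parent (parent x) then 1 else 0))"
      using pd d schedule_bfs_iff[OF nbrs_in_V[OF pd[THEN conjunct1]]]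
        unfolding ideal_inbox_def by auto
    then show "\<exists>y p. ideal_inbox t x (depth x - 1) y = Some (prod_encode (1, p))" by blast
  next
    fix r assume "\<exists>y p. ideal_inbox t x r y = Some (prod_encode (1, p))"
    then obtain y p where "ideal_inbox t x r y = Some (prod_encode (1, p))" by blast
    then have "y \<in> nbrs E x" "schedule r y x = Some (prod_encode (1, p))"
      unfolding ideal_inbox_def by (auto split: if_splits)
    then have "r = depth y" "depth x \<le> depth y + 1"
      using schedule_bfs_iff[OF nbrs_in_V] nbrs_sym depth_nbr_le by blast+
    then show "depth x - 1 \<le> r" by simp
  qed
  then show ?thesis using False pd by (simp add: v_depth_def)
qed

lemma v_parent_eq:
  assumes x: "x \<in> V" and d: "depth x \<le> t"
  shows "v_parent (ideal_view t x) = parent x"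
proof (cases "x = l")
  case True then show ?thesis by (simp add: v_parent_def)
next
  case False
  note pd = parent_nbr_depth[OF x False]
  have eq: "(\<exists>p. ideal_inbox t x (depth x - 1) y = Some (prod_encode (1, p)))
    \<longleftrightarrow> ({y,x} \<in> E \<and> depth y + 1 = depth x)" for y
  proof -
    have "(\<exists>p. ideal_inbox t x (depth x - 1) y = Some (prod_encode (1, p))) \<longleftrightarrow> y \<in> nbrs E x
      \<and> (\<exists>p. schedule (depth x - 1) y x = Some (prod_encode (1, p)))"
      unfolding ideal_inbox_def using pd d by auto
    also have "\<dots> \<longleftrightarrow> y \<in> nbrs E x \<and> depth y = depth x - 1"
      using schedule_bfs_iff[OF nbrs_in_V, of y x] by auto
    also have "\<dots> \<longleftrightarrow> ({y,x} \<in> E \<and> depth y + 1 = depth x)"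
      using pd by (auto simp: nbrs_def)
    finally show ?thesis .
  qed
  have "v_parent (ideal_view t x)
    = (LEAST y. \<exists>p. ideal_inbox t x (depth x - 1) y = Some (prod_encode (1, p)))"
    using v_depth_eq[OF x d] False by (simp add: v_parent_def)
  also have "\<dots> = parent x" using eq False by (simp add: parent_def)
  finally show ?thesis .
qed

lemma v_children_eq:
  assumes x: "x \<in> V" and tt: "t' \<le> t" and d: "depth x + 2 \<le> t'"
  shows "v_children (ideal_view t x) t' = children x"
proof -
  have "v_children (ideal_view t x) t'
    = {y. y \<in> nbrs E x \<and> depth y < t' \<and> y \<noteq> l \<and> x = parent y}"
    unfolding v_children_def using received_bfs_iff[OF tt] by auto
  also have "\<dots> = children x"
    using childrenD d children_iff by fastforce
  finally show ?thesis .
qed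

lemma v_ready_iff:
  assumes x: "x \<in> V" and tt: "t' \<le> t"
  shows "v_ready (ideal_view t x) t' \<longleftrightarrow> upcast_round x \<le> t'"
proof
  assume r: "v_ready (ideal_view t x) t'"
  then have dx: "depth x \<le> t'" using v_reached_iff[OF x tt] by (simp add: v_ready_def)
  then have dL: "v_depth (ideal_view t x) = depth x" using v_depth_eq[OF x] tt by simp
  then have d2: "depth x + 2 \<le> t'" using r by (simp add: v_ready_def)
  then have ch: "v_children (ideal_view t x) t' = children x" using v_children_eq[OF x tt] by simp
  have "\<forall>c\<in>children x. upcast_round c < t'"
  proof
    fix c assume c: "c \<in> children x"
    then have "has_received (ideal_inbox t x) t' c 2" using r ch by (simp add: v_ready_def)
    then show "upcast_round c < t'" using received_size_iff[OF tt] by (auto simp: has_received_def)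
  qed
  then show "upcast_round x \<le> t'" using upcast_round_le_iff[OF x] d2 by simp
next
  assume s: "upcast_round x \<le> t'"
  then have d2: "depth x + 2 \<le> t'"
    and cs: "\<forall>c\<in>children x. upcast_round c < t'" using upcast_round_le_iff[OF x] by auto
  have dL: "v_depth (ideal_view t x) = depth x" using v_depth_eq[OF x] tt d2 by simp
  have ch: "v_children (ideal_view t x) t' = children x" using v_children_eq[OF x tt d2] .
  have "\<forall>c\<in>children x. has_received (ideal_inbox t x) t' c 2"
  proof
    fix c assume c: "c \<in> children x"
    then show "has_received (ideal_inbox t x) t' c 2"
      using received_size_iff[OF tt] cs childrenD[OF c] nbrs_sym by (auto simp: has_received_def)
  qed
  then show "v_ready (ideal_view t x) t'"
    using v_reached_iff[OF x tt] d2 dL ch by (simp add: v_ready_def)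
qed

lemma received_size_value:
  assumes "c \<in> children x" "upcast_round c < t"
  shows "received_value (ideal_inbox t x) t c 2 = prod_encode (subtree_size c, max_depth c)"
  using assms childrenD[OF assms(1)] nbrs_sym received_size_iff[of t t]
    by (intro received_value_eqI) auto

lemma v_size_max_depth_eq:
  assumes x: "x \<in> V" and s: "upcast_round x \<le> t"
  shows "v_size (ideal_view t x) = subtree_size x \<and> v_max_depth (ideal_view t x) = max_depth x"
proof -
  have d2: "depth x + 2 \<le> t"
    and cs: "\<forall>c\<in>children x. upcast_round c < t"
    using upcast_round_le_iff[OF x] s by auto
  have ch: "v_children (ideal_view t x) t = children x" using v_children_eq[OF x _ d2] by simp
  have dL: "v_depth (ideal_view t x) = depth x" using v_depth_eq[OF x] d2 by simp
  have g: "\<And>c. c \<in> children x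
    \<Longrightarrow> received_value (ideal_inbox t x) t c 2
    = prod_encode (subtree_size c, max_depth c)" using received_size_value cs by blast
  have "v_size (ideal_view t x) = 1 + (\<Sum>c\<in>children x. subtree_size c)"
    unfolding v_size_def using ch g by (simp cong: sum.cong)
  moreover have "v_max_depth (ideal_view t x) = Max (insert (depth x) (max_depth ` children x))"
    unfolding v_max_depth_def using ch g dL by (simp cong: image_cong)
  ultimately show ?thesis using subtree_size_rec[OF x] Max_max_depth_children[OF x] by simp
qed

lemma v_informed_iff:
  assumes x: "x \<in> V"
  shows "v_informed (ideal_view t x) \<longleftrightarrow> 2 * height + 2 + depth x \<le> t"
proof (cases "x = l")
  case True then show ?thesis
    using v_ready_iff[OF x, of t t] by (simp add: v_informed_def upcast_round_root depth_root)
next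
  case False
  note pd = parent_nbr_depth[OF x False]
  show ?thesis
  proof (cases "depth x \<le> t")
    case True
    have xc: "x \<in> children (parent x)" using x False by (simp add: children_def)
    have "v_informed (ideal_view t x)
      \<longleftrightarrow> has_received (ideal_inbox t x) t (parent x) 3"
      using False v_reached_iff[OF x, of t t] True v_parent_eq[OF x True]
        by (simp add: v_informed_def)
    also have "\<dots> \<longleftrightarrow> 2 * height + 2 + depth (parent x) < t"
      using received_preorder_iff[of t t] pd xc by (auto simp: has_received_def)
    finally show ?thesis using pd by (simp add: Suc_le_eq)
  next
    case False
    then show ?thesis using \<open>x \<noteq> l\<close> v_reached_iff[OF x, of t t]
      by (simp add: v_informed_def)
  qed
qed

lemma v_height_preorder_eq:
  assumes x: "x \<in> V" and k: "2 * height + 2 + depth x \<le> t"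
  shows "v_height (ideal_view t x) = height \<and> v_preorder (ideal_view t x) = preorder x"
proof (cases "x = l")
  case True
  then have "v_max_depth (ideal_view t x) = height"
    using v_size_max_depth_eq[OF x] k upcast_round_root max_depth_root by simp
  then show ?thesis using True by (simp add: v_height_def v_preorder_def preorder_root)
next
  case False
  note pd = parent_nbr_depth[OF x False]
  have xc: "x \<in> children (parent x)" using x False by (simp add: children_def)
  have "received_value (ideal_inbox t x) t (parent x) 3 = prod_encode (preorder x, height)"
    using received_preorder_iff[of t t] pd xc k by (intro received_value_eqI) auto
  then show ?thesis using False v_parent_eq[OF x] k by (simp add: v_height_def v_preorder_def)
qed

lemma v_child_preorder_eq:
  assumes x: "x \<in> V" and k: "2 * height + 2 + depth x \<le> t" and c: "c \<in> children x"
  shows "v_child_preorder (ideal_view t x) c = preorder c"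
proof -
  have ch: "v_children (ideal_view t x) t = children x" using v_children_eq[OF x] k by simp
  have g: "received_value (ideal_inbox t x) t c' 2 = prod_encode (subtree_size c', max_depth c')"
    if "c' \<in> children x" for c'
  proof -
    have "upcast_round c' \<le> 2 * height - depth c' + 2"
      using upcast_round_le childrenD[OF that] by blast
    moreover have "depth c' = depth x + 1" using childrenD[OF that] by simp
    moreover have "depth c' \<le> height" using childrenD[OF that] depth_le_height by blast
    ultimately have "upcast_round c' < t" using k by linarith
    then show ?thesis using received_size_value that by blast
  qed
  have sm: "(\<Sum>c'\<in>{c' \<in> children x. c' < c}. fst
    (prod_decode (received_value (ideal_inbox t x) t c' 2)))
    = (\<Sum>c'\<in>{c' \<in> children x. c' < c}. subtree_size c')"
    by (rule sum.cong) (auto simp: g)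
  have "v_child_preorder (ideal_view t x) c
    = preorder x + 1 + (\<Sum>c'\<in>{c' \<in> children x. c' < c}. subtree_size c')"
    unfolding v_child_preorder_def using v_height_preorder_eq[OF x k] ch sm by simp
  also have "\<dots> = preorder c" using preorder_rec childrenD[OF c] by simp
  finally show ?thesis .
qed

lemma v_low_high_eq:
  assumes x: "x \<in> V" and k: "4 * height + 4 - depth x \<le> t"
  shows "v_low (ideal_view t x) = low x \<and> v_high (ideal_view t x) = high x
    \<and> v_parent_bridge (ideal_view t x) = parent_bridge x"
proof -
  have dD: "depth x \<le> height" using depth_le_height[OF x] .
  have k2: "2 * height + 2 + depth x \<le> t" using k dD by simp
  have k3: "3 * height + 3 < t" using k dD by simp
  have sx: "upcast_round x \<le> t" using upcast_round_le[OF x] k dD by simp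
  have ch: "v_children (ideal_view t x) t = children x" using v_children_eq[OF x] k2 by simp
  have pl: "v_parent (ideal_view t x) = parent x" using v_parent_eq[OF x] k2 by simp
  have pr: "v_preorder (ideal_view t x) = preorder x" using v_height_preorder_eq[OF x k2] by simp
  have g4: "received_value (ideal_inbox t x) t y 4 = preorder y" if "y \<in> nbrs E x" for y
    using received_announce_iff[of t t] that k3 by (intro received_value_eqI) auto
  have g5: "received_value (ideal_inbox t x) t c 5 = prod_encode (low c, high c)" if
    "c \<in> children x" for c
  proof -
    have "4 * height + 4 - depth c < t" using childrenD[OF that] k dD by simp
    then show ?thesis using received_low_high_iff[of t t] childrenD[OF that] nbrs_sym
      by (intro received_value_eqI) auto
  qed
  have i4: "(\<lambda>y. received_value (ideal_inbox t x) t y 4) ` (nbrs E x - {parent x})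
    = preorder ` (nbrs E x - {parent x})"
    by (rule image_cong) (auto simp: g4)
  have lo: "v_low (ideal_view t x) = low x"
    unfolding v_low_def using ch pl pr i4 g5 low_rec[OF x] by (simp cong: image_cong)
  have hi: "v_high (ideal_view t x) = high x"
    unfolding v_high_def using ch pl pr i4 g5 high_rec[OF x] by (simp cong: image_cong)
  have "v_parent_bridge (ideal_view t x) = parent_bridge x"
    unfolding v_parent_bridge_def parent_bridge_def
      using lo hi pr v_size_max_depth_eq[OF x sx] by simp
  then show ?thesis using lo hi by simp
qed

lemma v_label_eq:
  assumes x: "x \<in> V" and k: "4 * height + 5 + depth x \<le> t"
  shows "v_label (ideal_view t x) = label x"
proof (cases "x = l")
  case True then show ?thesis by (simp add: v_label_def label_root)
next
  case False
  note pd = parent_nbr_depth[OF x False]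
  have xc: "x \<in> children (parent x)" using x False by (simp add: children_def)
  have b: "v_parent_bridge (ideal_view t x) = parent_bridge x" using v_low_high_eq[OF x] k by simp
  have pl: "v_parent (ideal_view t x) = parent x" using v_parent_eq[OF x] k by simp
  have g6: "received_value (ideal_inbox t x) t (parent x) 6 = label (parent x)"
    using received_label_iff[of t t] pd xc k by (intro received_value_eqI) auto
  show ?thesis using False b pl g6 label_rec[OF x False] by (simp add: v_label_def)
qed

lemma v_halted_iff:
  assumes x: "x \<in> V"
  shows "v_halted (ideal_view t x) \<longleftrightarrow> 5 * height + 5 \<le> t"
proof -
  have dD: "depth x \<le> height" using depth_le_height[OF x] .
  show ?thesis
  proof (cases "2 * height + 2 + depth x \<le> t")
    case True then show ?thesis
      using v_informed_iff[OF x] v_height_preorder_eq[OF x] by (simp add: v_halted_def)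
  next
    case False then show ?thesis using v_informed_iff[OF x] dD by (simp add: v_halted_def)
  qed
qed

lemma v_informed_view_eq:
  assumes x: "x \<in> V" and k: "2 * height + 2 + depth x \<le> t"
  shows "v_height (ideal_view t x) = height \<and> v_depth (ideal_view t x) = depth x
    \<and> v_children (ideal_view t x) t = children x \<and> v_parent (ideal_view t x) = parent x
    \<and> v_preorder (ideal_view t x) = preorder x"
  using k v_height_preorder_eq[OF x] v_depth_eq[OF x] v_children_eq[OF x, of t t]
    v_parent_eq[OF x] by auto

lemma v_ready_first_iff:
  assumes x: "x \<in> V"
  shows "v_ready (ideal_view t x) t \<and> \<not> v_ready (ideal_view t x) (t - 1) \<longleftrightarrow> t = upcast_round x"
  using v_ready_iff[OF x, of t t] v_ready_iff[OF x, of "t - 1" t] upcast_round_ge[OF x] by auto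

lemma v_msg_eq_schedule:
  assumes x: "x \<in> V" and v: "v \<in> nbrs E x"
  shows "v_msg (ideal_view t x) v = schedule t x v"
proof -
  define w where "w = ideal_view t x"
  have dD: "depth x \<le> height" using depth_le_height[OF x] .
  have informed: "v_informed w \<longleftrightarrow> 2 * height + 2 + depth x \<le> t"
    using v_informed_iff[OF x] unfolding w_def by simp
  have known: "v_informed w \<Longrightarrow> v_height w = height \<and> v_depth w = depth x
    \<and> v_children w t = children x \<and> v_parent w = parent x \<and> v_preorder w = preorder x"
    using v_informed_view_eq[OF x] informed unfolding w_def by blast
  have ready: "v_ready w t \<Longrightarrow> v_reached w t \<and> v_parent w = parent x"
    using v_ready_iff[OF x, of t t] v_reached_iff[OF x, of t t] v_parent_eq[OF x]
      upcast_round_ge[OF x] unfolding w_def by auto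
  have guard1: "(v_reached w t \<and> t = v_depth w) = (t = depth x)"
    using v_reached_iff[OF x, of t t] v_depth_eq[OF x] unfolding w_def by auto
  have payload1: "t = depth x \<Longrightarrow> (\<not> view_leader w \<and> v = v_parent w) = (x \<noteq> l \<and> v = parent x)"
    using v_parent_eq[OF x] unfolding w_def by auto
  have guard2: "(\<not> view_leader w \<and> v_reached w t \<and> v = v_parent w \<and> v_ready w t
      \<and> \<not> v_ready w (t - 1)) = (x \<noteq> l \<and> v = parent x \<and> t = upcast_round x)"
    using v_ready_first_iff[OF x, of t] ready unfolding w_def by auto
  have payload2: "t = upcast_round x \<Longrightarrow> v_size w = subtree_size x"
    "t = upcast_round x \<Longrightarrow> v_max_depth w = max_depth x"
    using v_size_max_depth_eq[OF x] unfolding w_def by auto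
  have guard3: "(v_informed w \<and> v \<in> v_children w t \<and> t = 2 * v_height w + 2 + v_depth w)
      = (v \<in> children x \<and> t = 2 * height + 2 + depth x)"
    using known informed by auto
  have payload3: "t = 2 * height + 2 + depth x \<Longrightarrow> v \<in> children x
      \<Longrightarrow> v_child_preorder w v = preorder v"
    "t = 2 * height + 2 + depth x \<Longrightarrow> v_height w = height"
    using v_child_preorder_eq[OF x] known informed unfolding w_def by auto
  have guard4: "(v_informed w \<and> t = 3 * v_height w + 3) = (t = 3 * height + 3)"
    using known informed dD by auto
  have payload4: "t = 3 * height + 3 \<Longrightarrow> v_preorder w = preorder x"
    using known informed dD by auto
  have guard5: "(\<not> view_leader w \<and> v_informed w \<and> v = v_parent w
      \<and> t = 4 * v_height w + 4 - v_depth w)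
    = (x \<noteq> l \<and> v = parent x \<and> t = 4 * height + 4 - depth x)"
    using known informed dD by (auto simp: w_def)
  have payload5: "t = 4 * height + 4 - depth x \<Longrightarrow> v_low w = low x"
    "t = 4 * height + 4 - depth x \<Longrightarrow> v_high w = high x"
    using v_low_high_eq[OF x] unfolding w_def by auto
  have guard6: "(v_informed w \<and> v \<in> v_children w t \<and> t = 4 * v_height w + 5 + v_depth w)
      = (v \<in> children x \<and> t = 4 * height + 5 + depth x)"
    using known informed by auto
  have payload6: "t = 4 * height + 5 + depth x \<Longrightarrow> v_label w = label x"
    using v_label_eq[OF x] unfolding w_def by auto
  have "view_round w = t" by (simp add: w_def)
  then have "v_msg w v = schedule t x v"
    unfolding v_msg_def Let_def schedule_def
    by (simp only: guard1 guard2 guard3 guard4 guard5 guard6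
        payload1 payload2 payload3 payload4 payload5 payload6 simp_thms cong: if_cong)
  then show ?thesis by (simp add: w_def)
qed

section \<open>Simulation\<close>

definition nbr_list :: "nat \<Rightarrow> nat list" where
  "nbr_list x = sorted_list_of_set (nbrs E x)"

lemma set_nbr_list[simp]: "set (nbr_list x) = nbrs E x"
  using finite_nbrs by (simp add: nbr_list_def)

primrec ideal_log :: "nat \<Rightarrow> nat \<Rightarrow> (nat \<times> nat \<times> nat) list" where
  "ideal_log 0 x = []"
| "ideal_log (Suc t) x = ideal_log t x @
    map (\<lambda>y. (t, y, the (schedule t y x))) (filter (\<lambda>y. schedule t y x \<noteq> None) (nbr_list x))"

lemma set_ideal_log:
  "(r,y,m) \<in> set (ideal_log t x) \<longleftrightarrow> r < t \<and> y \<in> nbrs E x \<and> schedule r y x = Some m"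
  by (induct t) (auto simp: less_Suc_eq)

lemma inbox_of_ideal_log: "inbox_of_log (ideal_log t x) = ideal_inbox t x"
proof (intro ext)
  fix r y
  show "inbox_of_log (ideal_log t x) r y = ideal_inbox t x r y"
  proof (cases "r < t \<and> y \<in> nbrs E x \<and> schedule r y x \<noteq> None")
    case True
    then obtain m where m: "schedule r y x = Some m" by blast
    then have "(THE m. (r,y,m) \<in> set (ideal_log t x)) = m"
      using True by (auto simp: set_ideal_log)
    then show ?thesis using True m by (auto simp: inbox_of_log_def ideal_inbox_def set_ideal_log)
  next
    case False then show ?thesis by (auto simp: inbox_of_log_def ideal_inbox_def set_ideal_log)
  qed
qed

lemma view_of_ideal_state: "view_of (x, x = l, nbr_list x, t, ideal_log t x) = ideal_view t x"
  by (simp add: view_of_def ideal_view_def inbox_of_ideal_log)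

abbreviation halting_round :: nat where "halting_round \<equiv> 5 * height + 5"

lemma record_round_ideal:
  assumes "\<And>u. u \<in> nbrs E v \<Longrightarrow> r u = schedule t u v"
  shows "record_round (v, v = l, nbr_list v, t, ideal_log t v) r
    = (v, v = l, nbr_list v, Suc t, ideal_log (Suc t) v)"
proof -
  have "filter (\<lambda>y. r y \<noteq> None) (nbr_list v) = filter (\<lambda>y. schedule t y v \<noteq> None) (nbr_list v)"
    using assms by (intro filter_cong) auto
  moreover have "map (\<lambda>y. (t, y, the (r y))) (filter (\<lambda>y. schedule t y v \<noteq> None) (nbr_list v))
      = map (\<lambda>y. (t, y, the (schedule t y v))) (filter (\<lambda>y. schedule t y v \<noteq> None) (nbr_list v))"
    using assms by (intro map_cong) auto
  ultimately show ?thesis by (simp add: record_round_def)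
qed

lemma run_eq_ideal:
  "t \<le> halting_round \<Longrightarrow> v \<in> V
    \<Longrightarrow> run bridges_alg E l t v = encode_state (v, v = l, nbr_list v, t, ideal_log t v)"
proof (induct t arbitrary: v)
  case 0
  then show ?case by (simp add: bridges_alg_def nbr_list_def)
next
  case (Suc t)
  have IH: "run bridges_alg E l t u = encode_state (u, u = l, nbr_list u, t, ideal_log t u)"
    if "u \<in> V" for u
    using Suc that by simp
  have active: "\<not> halted bridges_alg (run bridges_alg E l t u)" if "u \<in> V" for u
    using IH[OF that] v_halted_iff[OF that] Suc.prems
    by (simp add: bridges_alg_def view_of_ideal_state)
  let ?r = "\<lambda>u. if u \<in> nbrs E v \<and> \<not> halted bridges_alg (run bridges_alg E l t u)
    then msg bridges_alg (run bridges_alg E l t u) v else None"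
  have inbox: "?r u = schedule t u v" if "u \<in> nbrs E v" for u
    using that IH[OF nbrs_in_V[OF that]] active[OF nbrs_in_V[OF that]]
      v_msg_eq_schedule[OF nbrs_in_V[OF that]] nbrs_sym
    by (simp add: bridges_alg_def view_of_ideal_state)
  have "run bridges_alg E l (Suc t) v = trans bridges_alg (run bridges_alg E l t v) ?r"
    using active[OF Suc.prems(2)] by (simp add: Let_def)
  also have "\<dots> = encode_state (record_round (v, v = l, nbr_list v, t, ideal_log t v) ?r)"
    using IH[OF Suc.prems(2)] by (simp add: bridges_alg_def)
  also have "record_round (v, v = l, nbr_list v, t, ideal_log t v) ?r
      = (v, v = l, nbr_list v, Suc t, ideal_log (Suc t) v)"
    using inbox by (rule record_round_ideal)
  finally show ?case .
qed

lemma halted_at_halting_round: "v \<in> V \<Longrightarrow> halted bridges_alg (run bridges_alg E l halting_round v)"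
  using run_eq_ideal[of halting_round v] v_halted_iff
    by (simp add: bridges_alg_def view_of_ideal_state)

lemma run_after_halting:
  "v \<in> V \<Longrightarrow> run bridges_alg E l (halting_round + k) v = run bridges_alg E l halting_round v"
proof (induct k arbitrary: v)
  case 0 then show ?case by simp
next
  case (Suc k)
  then have "halted bridges_alg (run bridges_alg E l (halting_round + k) v)"
    using halted_at_halting_round by simp
  then have "run bridges_alg E l (Suc (halting_round + k)) v
    = run bridges_alg E l (halting_round + k) v" by (rule run_Suc_halted)
  then show ?case using Suc unfolding add_Suc_right by simp
qed

lemma sent_eq_schedule:
  "{u,v} \<in> E \<Longrightarrow> sent bridges_alg E l t v u = (if t < halting_round then schedule t v u else None)"
proof -
  assume e: "{u,v} \<in> E"
  then have v: "v \<in> V" and u: "u \<in> nbrs E v" using edge_in_V by (auto simp: nbrs_def)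
  show ?thesis
  proof (cases "t < halting_round")
    case True
    then have "run bridges_alg E l t v = encode_state (v, v = l, nbr_list v, t, ideal_log t v)"
      using run_eq_ideal v by simp
    then show ?thesis using True e v_halted_iff[OF v] v_msg_eq_schedule[OF v u]
      by (simp add: sent_def bridges_alg_def view_of_ideal_state)
  next
    case False
    then obtain k where "t = halting_round + k" by (metis le_add_diff_inverse not_less)
    then show ?thesis using run_after_halting[OF v] halted_at_halting_round[OF v] False
      by (simp add: sent_def)
  qed
qed

lemma sent_non_edge: "{u,v} \<notin> E \<Longrightarrow> sent bridges_alg E l t v u = None"
  by (simp add: sent_def)

lemma out_eq_label: "v \<in> V \<Longrightarrow> out bridges_alg (run bridges_alg E l halting_round v) = label v"
  using run_eq_ideal[of halting_round v] v_label_eq[of v halting_round] depth_le_height[of v]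
    by (simp add: bridges_alg_def view_of_ideal_state)

section \<open>Complexity\<close>

lemma height_less_card: "height < card V"
proof -
  have "height \<in> depth ` V" unfolding height_def
    using finite_V V_nonempty by (intro Max_in) auto
  then show ?thesis using depth_less_card by auto
qed

lemma subtree_size_le_card: "subtree_size s \<le> card V" unfolding subtree_size_def
  using subtree_subset finite_V by (rule card_mono[rotated])

lemma schedule_less:
  assumes v: "v \<in> V" and m: "schedule t v u = Some m"
  shows "m < (card V + Max V + 2) ^ 10"
proof -
  let ?N = "card V + Max V + 2"
  have N: "3 \<le> ?N" using finite_V V_nonempty by (simp add: Suc_le_eq card_gt_0_iff)
  have "?N \<le> 4 * ?N^2" by (simp add: power2_eq_square)
  then have widen: "a < 4 * ?N^2" if "a < ?N" for a using that by linarith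
  have payloads: "height < ?N" "subtree_size v < ?N" "max_depth v < ?N" "preorder v < ?N"
    "low v < ?N" "high v < ?N" "label v < ?N"
    using height_less_card subtree_size_le_card[of v] max_depth_le_height[OF v]
      preorder_less[OF v] low_lt[OF v] high_lt[OF v] Max_ge[OF finite_V label_in_V[OF v]]
    by linarith+
  have "u \<in> children v \<Longrightarrow> preorder u < ?N" using preorder_less childrenD by fastforce
  then have "\<exists>k p. m = prod_encode (k, p) \<and> k \<le> 6 \<and> p < 4 * ?N^2"
    using m payloads widen prod_encode_less[of _ ?N] N unfolding schedule_def
    by (auto split: if_splits intro!: exI)
  then show ?thesis using tagged_prod_encode_less N by blast
qed

definition oriented_edges :: "(nat \<times> nat) set" where
  "oriented_edges = {(v, u). {u, v} \<in> E}"

lemma finite_oriented_edges: "finite oriented_edges"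
proof -
  have "oriented_edges \<subseteq> V \<times> V" using edge_in_V by (auto simp: oriented_edges_def)
  then show ?thesis using finite_V finite_subset by blast
qed

lemma card_oriented_edges: "card oriented_edges \<le> 2 * card E"
proof -
  let ?Q = "\<lambda>e. {(v, u). {u, v} = e}"
  have card_Q: "card (?Q e) \<le> 2" if e: "e \<in> E" for e
  proof -
    obtain a b where "e = {a, b}" using edge_doubleton[OF e] by blast
    then have "?Q e \<subseteq> {(a, b), (b, a)}" by (auto simp: doubleton_eq_iff)
    then have "card (?Q e) \<le> card {(a, b), (b, a)}" by (rule card_mono[rotated]) simp
    also have "\<dots> \<le> 2" by (simp add: card_insert_le_m1)
    finally show ?thesis .
  qed
  have "oriented_edges = (\<Union>e\<in>E. ?Q e)" by (auto simp: oriented_edges_def)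
  then have "card oriented_edges \<le> (\<Sum>e\<in>E. card (?Q e))"
    using card_UN_le[OF finite_E] by simp
  also have "\<dots> \<le> (\<Sum>e\<in>E. 2)" using card_Q by (rule sum_mono)
  finally show ?thesis by simp
qed

lemma card_nonroot_le_card_E: "card (V - {l}) \<le> card E"
proof (rule card_inj_on_le[OF _ _ finite_E])
  show "inj_on (\<lambda>v. {parent v, v}) (V - {l})" using tree_edge_inj by (auto intro!: inj_onI)
  show "(\<lambda>v. {parent v, v}) ` (V - {l}) \<subseteq> E" using parent_spec by auto
qed

lemma msgs_in_round_eq:
  assumes "t < halting_round"
  shows "msgs_in_round bridges_alg E l t
    = card {(v, u) \<in> oriented_edges. schedule t v u \<noteq> None}"
proof -
  have "sent bridges_alg E l t v u \<noteq> None
    \<longleftrightarrow> (v, u) \<in> oriented_edges \<and> schedule t v u \<noteq> None" for v u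
    by (cases "{u, v} \<in> E")
      (simp_all add: sent_eq_schedule sent_non_edge assms oriented_edges_def)
  then show ?thesis by (simp add: msgs_in_round_def)
qed

lemma schedule_cases:
  assumes "schedule t v u \<noteq> None"
  shows "t = depth v \<or> t = 3 * height + 3 \<or>
    v \<noteq> l \<and> u = parent v
      \<and> (t = upcast_round v \<or> t = 4 * height + 4 - depth v) \<or>
    u \<in> children v \<and> (t = 2 * height + 2 + depth v \<or> t = 4 * height + 5 + depth v)"
  using assms unfolding schedule_def by (auto split: if_splits)

text \<open>The triples (round, sender, receiver) in which the protocol may send: two per oriented edge
  (BFS flooding, preorder announcement) and four per tree edge (two convergecasts up, two
  broadcasts down).\<close>

definition message_slots :: "(nat \<times> nat \<times> nat) set" where
  "message_slots =
     (\<lambda>(v, u). (depth v, v, u)) ` oriented_edges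
       \<union> Pair (3 * height + 3) ` oriented_edges \<union>
     (\<lambda>v. (upcast_round v, v, parent v)) ` (V - {l}) \<union>
     (\<lambda>v. (4 * height + 4 - depth v, v, parent v)) ` (V - {l}) \<union>
     (\<lambda>c. (2 * height + 2 + depth (parent c), parent c, c)) ` (V - {l}) \<union>
     (\<lambda>c. (4 * height + 5 + depth (parent c), parent c, c)) ` (V - {l})"

lemma finite_message_slots: "finite message_slots"
  unfolding message_slots_def using finite_oriented_edges finite_V by simp

lemma card_message_slots: "card message_slots \<le> 2 * card oriented_edges + 4 * card (V - {l})"
proof -
  have "card message_slots \<le> card oriented_edges + card oriented_edges
      + card (V - {l}) + card (V - {l}) + card (V - {l}) + card (V - {l})"
    unfolding message_slots_def
    by (intro order_trans[OF card_Un_le] add_mono card_image_le)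
      (simp_all add: finite_oriented_edges finite_V)
  then show ?thesis by simp
qed

lemma scheduled_in_message_slots:
  assumes "(v, u) \<in> oriented_edges" and "schedule t v u \<noteq> None"
  shows "(t, v, u) \<in> message_slots"
proof -
  have v: "v \<in> V" using assms(1) edge_in_V by (auto simp: oriented_edges_def)
  from schedule_cases[OF assms(2)] show ?thesis
  proof (elim disjE conjE)
    assume "t = depth v"
    then show ?thesis using assms(1) unfolding message_slots_def
      by (intro UnI1 rev_image_eqI[of "(v, u)"]) simp_all
  next
    assume "t = 3 * height + 3"
    then show ?thesis using assms(1) unfolding message_slots_def
      by (intro UnI1 UnI2[where A = "(\<lambda>(v, u). (depth v, v, u)) ` oriented_edges"]
          rev_image_eqI[of "(v, u)"]) simp_all
  next
    assume "v \<noteq> l" "u = parent v" "t = upcast_round v"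
    then have "(t, v, u) \<in> (\<lambda>v. (upcast_round v, v, parent v)) ` (V - {l})"
      using v by (intro rev_image_eqI[of v]) simp_all
    then show ?thesis unfolding message_slots_def by blast
  next
    assume "v \<noteq> l" "u = parent v" "t = 4 * height + 4 - depth v"
    then have "(t, v, u) \<in> (\<lambda>v. (4 * height + 4 - depth v, v, parent v)) ` (V - {l})"
      using v by (intro rev_image_eqI[of v]) simp_all
    then show ?thesis unfolding message_slots_def by blast
  next
    assume "u \<in> children v" "t = 2 * height + 2 + depth v"
    then have "(t, v, u) \<in> (\<lambda>c. (2 * height + 2 + depth (parent c), parent c, c)) ` (V - {l})"
      using childrenD[of u v] by (intro rev_image_eqI[of u]) simp_all
    then show ?thesis unfolding message_slots_def by blast
  next
    assume "u \<in> children v" "t = 4 * height + 5 + depth v"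
    then have "(t, v, u) \<in> (\<lambda>c. (4 * height + 5 + depth (parent c), parent c, c)) ` (V - {l})"
      using childrenD[of u v] by (intro rev_image_eqI[of u]) simp_all
    then show ?thesis unfolding message_slots_def by blast
  qed
qed

lemma message_count: "(\<Sum>t<halting_round. msgs_in_round bridges_alg E l t) \<le> 8 * card E"
proof -
  let ?S = "\<lambda>t. {(v, u) \<in> oriented_edges. schedule t v u \<noteq> None}"
  have finite_S: "finite (?S t)" for t
    by (rule finite_subset[OF _ finite_oriented_edges]) auto
  have "(\<Sum>t<halting_round. msgs_in_round bridges_alg E l t)
    = (\<Sum>t<halting_round. card (?S t))"
    using msgs_in_round_eq by simp
  also have "\<dots> = card (SIGMA t:{..<halting_round}. ?S t)"
    using finite_S by (simp add: card_SigmaI)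
  also have "\<dots> \<le> card message_slots"
    using scheduled_in_message_slots by (intro card_mono finite_message_slots) auto
  also have "\<dots> \<le> 8 * card E"
    using card_message_slots card_oriented_edges card_nonroot_le_card_E by linarith
  finally show ?thesis .
qed

lemma height_le_diam: "height \<le> diam V E"
proof -
  have eq: "{dist E u v |u v. u \<in> V \<and> v \<in> V}
    = (\<lambda>(u,v). dist E u v) ` (V \<times> V)" by auto
  have fin: "finite {dist E u v |u v. u \<in> V \<and> v \<in> V}" unfolding eq
    using finite_V by simp
  have "height \<in> depth ` V" unfolding height_def
    using finite_V V_nonempty by (intro Max_in) auto
  then obtain x where x: "x \<in> V" "height = dist E l x" by (auto simp: depth_def)
  then have "height \<in> {dist E u v |u v. u \<in> V \<and> v \<in> V}" using root_in_V by blast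
  then show ?thesis unfolding diam_def using fin by simp
qed

lemma sent_less:
  assumes "sent bridges_alg E l t v u = Some x"
  shows "x < (card V + Max V + 2) ^ 10"
proof -
  have e: "{u, v} \<in> E" using assms sent_non_edge by fastforce
  then have "schedule t v u = Some x" using assms sent_eq_schedule by (simp split: if_splits)
  then show ?thesis using e edge_in_V schedule_less by blast
qed

end

theorem mainTheorem1:
  shows "\<exists>(A::alg) (c::nat). \<forall>V E l.
    simple_graph V E \<and> V \<noteq> {} \<and> connected_graph V E \<and> l \<in> V \<longrightarrow>
    (\<forall>t v u x. sent A E l t v u = Some x \<longrightarrow> x < (card V + Max V + 2) ^ c) \<and>
    (\<exists>T. T \<le> c * (diam V E + 1) \<and>
         (\<forall>v\<in>V. halted A (run A E l T v)) \<and>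
         (\<Sum>t<T. msgs_in_round A E l t) \<le> c * card E \<and>
         (\<forall>u\<in>V. \<forall>v\<in>V. out A (run A E l T u) = out A (run A E l T v)
                          \<longleftrightarrow> edge_biconn V E u v))"
proof (intro exI[of _ bridges_alg] exI[of _ 10] allI impI, goal_cases)
  case (1 V E l)
  then interpret rooted_graph V E l by unfold_locales auto
  have "halting_round \<le> 10 * (diam V E + 1)" using height_le_diam by simp
  moreover have "(\<Sum>t<halting_round. msgs_in_round bridges_alg E l t) \<le> 10 * card E"
    using message_count by simp
  ultimately show ?case
    using sent_less halted_at_halting_round out_eq_label label_eq_iff_edge_biconn
    by (auto intro!: exI[of _ halting_round])
qed

end
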